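(* Let $\alpha\in\mathcal{A}$ and let $F:\mathbb{R}^e \to L\big((\mathbb{R}^d)^{\otimes b}, \mathbb{R}^e \big)$ be a globally Lipschitz continuous map for some $b \geq 1$. Then \[ \mathbb{E}\big[\|J^\gamma_{\alpha}(F) \|^2\big] = O\big(h^{2\,\mathrm{ord}(\alpha) + 1}\big). \]
   Context: Let $h>0$ be a step size and let $\gamma=(\gamma^\tau,\gamma^{\omega})^\top:[0,1]\to\mathbb{R}^{1+d}$ be a (random) piecewise linear path with $m\in\mathbb{N}$ pieces, almost surely of finite length, with vertices at $0=r_0<r_1<\cdots<r_m=1$, such that for each piece $i$: the time increment $\gamma^\tau_{r_i,r_{i+1}}$ is deterministic with $\gamma^\tau_{r_i,r_{i+1}}=O(h)$, and the space increment satisfies $\mathbb{E}\big[|(\gamma^{\omega}_{r_i,r_{i+1}})_j|^{2k}\big]=O(h^k)$ for every $j\in\{1,\dots,d\}$ and $k\in\mathbb{N}$. Let $y^\gamma$ solve the controlled differential equation $dy^\gamma_r = f(y^\gamma_r)\,d\gamma^\tau(r) + g(y^\gamma_r)\,d\gamma^{\omega}(r)$, $r\in[0,1]$, with $y^\gamma_0=y_0\in L^4(\mathbb{R}^e)$ independent of $\gamma$, where $f:\mathbb{R}^e\to\mathbb{R}^e$ and $g:\mathbb{R}^e\to\mathbb{R}^{e\times d}$ satisfy $\|f(y)\|\le C(1+\|y\|)$, $\|g(y)\|\le C(1+\|y\|)$, and $\mathbb{E}\big[\exp\big(16\,C\int_0^1|d\gamma(u)|\big)\big]<\infty$ (here $\int_0^1|d\gamma(u)|$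 is the length of $\gamma$). For a multi-index $\alpha=(\alpha_1,\dots,\alpha_n)\in\mathcal{A}=\bigcup_{n\ge0}\{\tau,\omega\}^n$, define \[ I^\gamma_{\alpha}(F) := \int_0^1 \int_0^{r_1} \cdots \int_0^{r_{n-1}} F(y^\gamma_{r_n})\, d\gamma^{\alpha_1}(r_n)\cdots d\gamma^{\alpha_n}(r_1), \] where $d\gamma^\tau$ is the scalar time component and each $d\gamma^{\omega}$ enters via tensor product $\otimes\, d\gamma^{\omega}$; $I^\gamma_\alpha(1)$ is the same with $F$ replaced by the scalar $1$; and $J^\gamma_{\alpha}(F) := I^\gamma_{\alpha}(F) - F(y^\gamma_0)I^\gamma_{\alpha}(1)$. The order of $\alpha$ is $\mathrm{ord}(\alpha)=|\alpha|_\tau+\tfrac12|\alpha|_\omega$, where $|\alpha|_\tau$ and $|\alpha|_\omega$ count the entries of $\alpha$ equal to $\tau$ and $\omega$ respectively. *)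

theory Defs
  imports "HOL-Probability.Probability" "HOL-Library.Landau_Symbols"
begin

text \<open>Letters of multi-indices: Tau (time) and Omega (space).\<close>
datatype letter = Tau | Omega

definition cnt :: "letter \<Rightarrow> letter list \<Rightarrow> nat" where
  "cnt a al = length (filter (\<lambda>b. b = a) al)"

definition ord :: "letter list \<Rightarrow> real" where
  "ord al = real (cnt Tau al) + real (cnt Omega al) / 2"

definition pl_deriv :: "(nat \<Rightarrow> real) \<Rightarrow> nat \<Rightarrow> (real \<Rightarrow> 'a::real_vector) \<Rightarrow> real \<Rightarrow> 'a" where
  "pl_deriv r m p u =
     (\<Sum>i<m. indicator {r i..<r (Suc i)} u *\<^sub>R
              ((1 / (r (Suc i) - r i)) *\<^sub>R (p (r (Suc i)) - p (r i))))"

text \<open>The letter list is given OUTERMOST FIRST (i.e. reversed multi-index).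
  The list ks holds the tensor component indices of the d-omega factors, ordered
  as the omega letters occur in the (non-reversed) multi-index; the outermost
  omega integral uses the last index.\<close>
fun iint :: "(real \<Rightarrow> 'v::real_normed_vector) \<Rightarrow> (real \<Rightarrow> real \<times> (real^'d))
              \<Rightarrow> letter list \<Rightarrow> 'd list \<Rightarrow> real \<Rightarrow> 'v" where
  "iint phi dg [] ks s = phi s"
| "iint phi dg (Tau # be) ks s =
     integral {0..s} (\<lambda>u. fst (dg u) *\<^sub>R iint phi dg be ks u)"
| "iint phi dg (Omega # be) ks s =
     integral {0..s} (\<lambda>u. (snd (dg u) $ last ks) *\<^sub>R iint phi dg be (butlast ks) u)"

definition I_F :: "(nat \<Rightarrow> real) \<Rightarrow> nat \<Rightarrow> (real \<Rightarrow> real \<times> (real^'d)) \<Rightarrow> (real \<Rightarrow> 'y)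
                   \<Rightarrow> ('y \<Rightarrow> 'v::real_normed_vector) \<Rightarrow> letter list \<Rightarrow> 'd list \<Rightarrow> 'v" where
  "I_F r m gam y F al ks = iint (\<lambda>u. F (y u)) (pl_deriv r m gam) (rev al) ks 1"

definition I_one :: "(nat \<Rightarrow> real) \<Rightarrow> nat \<Rightarrow> (real \<Rightarrow> real \<times> (real^'d))
                   \<Rightarrow> letter list \<Rightarrow> 'd list \<Rightarrow> real" where
  "I_one r m gam al ks = iint (\<lambda>u. 1::real) (pl_deriv r m gam) (rev al) ks 1"

definition J_F :: "(nat \<Rightarrow> real) \<Rightarrow> nat \<Rightarrow> (real \<Rightarrow> real \<times> (real^'d)) \<Rightarrow> (real \<Rightarrow> 'y)
                   \<Rightarrow> ('y \<Rightarrow> 'v::real_normed_vector) \<Rightarrow> letter list \<Rightarrow> 'd list \<Rightarrow> 'v" where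
  "J_F r m gam y F al ks = I_F r m gam y F al ks - I_one r m gam al ks *\<^sub>R F (y 0)"

definition J_norm2 :: "(nat \<Rightarrow> real) \<Rightarrow> nat \<Rightarrow> (real \<Rightarrow> real \<times> (real^'d::finite)) \<Rightarrow> (real \<Rightarrow> 'y)
                   \<Rightarrow> ('y \<Rightarrow> 'v::real_normed_vector) \<Rightarrow> letter list \<Rightarrow> real" where
  "J_norm2 r m gam y F al =
     (\<Sum>ks\<in>{ks::'d list. length ks = cnt Omega al}. (norm (J_F r m gam y F al ks))\<^sup>2)"

definition pl_length :: "(nat \<Rightarrow> real) \<Rightarrow> nat \<Rightarrow> (real \<Rightarrow> real \<times> (real^'d)) \<Rightarrow> real" where
  "pl_length r m gam = (\<Sum>i<m. norm (gam (r (Suc i)) - gam (r i)))"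

end

theory Submission
  imports Defs
begin

text \<open>
  \<open>J\<^sub>\<alpha>(F)\<close> is the iterated integral of \<open>u \<mapsto> F(y\<^sub>u) - F(y\<^sub>0)\<close> along the path, so its norm
  is at most \<open>Lip(F) \<cdot> sup\<^sub>u \<bar>y\<^sub>u - y\<^sub>0\<bar> \<cdot> T\<^bsup>|\<alpha>|\<^sub>\<tau>\<^esup> \<cdot> W\<^bsup>|\<alpha>|\<^sub>\<omega>\<^esup>\<close>, where \<open>T\<close> and \<open>W\<close> are the
  \<open>l\<^sup>1\<close>-variations of the time and space components of \<open>\<gamma>\<close>. Gronwall's inequality gives
  \<open>sup\<^sub>u \<bar>y\<^sub>u - y\<^sub>0\<bar> \<le> 2C\<ell>(1 + \<bar>y\<^sub>0\<bar>) exp(2C\<ell>)\<close> with \<open>\<ell> \<le> T + W\<close> the length of \<open>\<gamma>\<close>.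
  Instead of Hoelder's inequality, which would need the independence of \<open>y\<^sub>0\<close> and \<open>\<gamma>\<close>,
  Young's inequality \<open>abc \<le> \<epsilon>a\<^sup>2/2 + \<epsilon>b\<^sup>4/4 + c\<^sup>4/(4\<epsilon>\<^sup>3)\<close> with \<open>\<epsilon> = h\<^bsup>|\<alpha>|\<^sub>\<omega>+1\<^esup>\<close> separates
  \<open>a = (1 + \<bar>y\<^sub>0\<bar>)\<^sup>2\<close>, \<open>b = exp(4C\<ell>)\<close> and \<open>c = (T + W)\<^bsup>2|\<alpha>|\<^sub>\<omega>+2\<^esup>\<close> pointwise. The moment
  hypotheses make \<open>E a\<^sup>2\<close> and \<open>E b\<^sup>4\<close> bounded and \<open>E c\<^sup>4 = O(h\<^bsup>4|\<alpha>|\<^sub>\<omega>+4\<^esup>)\<close>, and the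
  deterministic \<open>T = O(h)\<close> contributes \<open>h\<^bsup>2|\<alpha>|\<^sub>\<tau>\<^esup>\<close>.
\<close>

section \<open>Elementary estimates\<close>

lemma mult_one_plus_le_sqrt2:
  fixes x :: real
  assumes "0 \<le> x"
  shows "x * (1 + x) \<le> sqrt 2 * (1 + x\<^sup>2)"
proof -
  have "x * (1 + x) \<le> 1.4 * (1 + x\<^sup>2)"
    using zero_le_power2[of "x - 5/4"] by (simp add: power2_eq_square algebra_simps)
  also have "\<dots> \<le> sqrt 2 * (1 + x\<^sup>2)"
    by (intro mult_right_mono real_le_rsqrt) (simp_all add: power2_eq_square)
  finally show ?thesis .
qed

lemma norm_Pair_le_sqrt2: "\<bar>fst z\<bar> + norm (snd z) \<le> sqrt 2 * norm (z :: real \<times> 'b::real_normed_vector)"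
proof -
  have "(\<bar>fst z\<bar> + norm (snd z))\<^sup>2 \<le> 2 * ((fst z)\<^sup>2 + (norm (snd z))\<^sup>2)"
    using sum_squares_bound[of "\<bar>fst z\<bar>" "norm (snd z)"] by (simp add: power2_eq_square algebra_simps)
  also have "\<dots> = (sqrt 2 * norm z)\<^sup>2"
    by (cases z) (simp add: norm_Pair power_mult_distrib)
  finally show ?thesis using power2_le_imp_le by force
qed

lemma norm_matrix_vector_mult_le:
  fixes A :: "real^'n^'m" and x :: "real^'n"
  shows "norm (A *v x) \<le> norm A * norm x"
proof -
  have row: "\<bar>(A *v x) $ i\<bar> \<le> norm (A $ i) * norm x" for i
    using Cauchy_Schwarz_ineq2[of "A $ i" x] by (simp add: matrix_vector_mult_def inner_vec_def)
  have "(norm (A *v x))\<^sup>2 = (\<Sum>i\<in>UNIV. ((A *v x) $ i)\<^sup>2)"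
    by (simp add: norm_vec_def L2_set_def sum_nonneg)
  also have "\<dots> \<le> (\<Sum>i\<in>UNIV. (norm (A $ i))\<^sup>2 * (norm x)\<^sup>2)"
    by (intro sum_mono) (metis abs_ge_zero power2_abs power_mono power_mult_distrib row)
  also have "\<dots> = (norm A * norm x)\<^sup>2"
    by (simp add: norm_vec_def L2_set_def sum_nonneg power_mult_distrib sum_distrib_right[symmetric])
  finally show ?thesis
    by (meson mult_nonneg_nonneg norm_ge_zero power2_le_imp_le)
qed

lemma young_three:
  fixes a b c \<epsilon> :: real
  assumes "0 \<le> a" "0 \<le> b" "0 \<le> c" "0 < \<epsilon>"
  shows "a * b * c \<le> \<epsilon> / 2 * a\<^sup>2 + \<epsilon> / 4 * b ^ 4 + c ^ 4 / (4 * \<epsilon> ^ 3)"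
proof -
  have "0 \<le> (\<epsilon> * a - b * c)\<^sup>2 / (2 * \<epsilon>)" using assms by simp
  then have ab: "a * (b * c) \<le> \<epsilon> / 2 * a\<^sup>2 + (b * c)\<^sup>2 / (2 * \<epsilon>)"
    using assms by (simp add: power2_eq_square field_simps)
  have "0 \<le> (\<epsilon>\<^sup>2 * b\<^sup>2 - c\<^sup>2)\<^sup>2 / (4 * \<epsilon> ^ 3)" using assms by simp
  then have "(b * c)\<^sup>2 / (2 * \<epsilon>) \<le> \<epsilon> / 4 * b ^ 4 + c ^ 4 / (4 * \<epsilon> ^ 3)"
    using assms by (simp add: power2_eq_square power3_eq_cube power4_eq_xxxx field_simps)
  with ab show ?thesis by (simp add: mult.assoc)
qed

lemma sum_power_le_card_power:
  fixes x :: "'a \<Rightarrow> real"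
  assumes A: "finite A" "A \<noteq> {}" and x: "\<And>a. a \<in> A \<Longrightarrow> 0 \<le> x a"
  shows "(\<Sum>a\<in>A. x a) ^ p \<le> real (card A) ^ p * (\<Sum>a\<in>A. x a ^ p)"
proof -
  have "Max (x ` A) \<in> x ` A" using A by (intro Max_in) auto
  then obtain a0 where a0: "a0 \<in> A" "x a0 = Max (x ` A)" by auto
  then have max: "x a \<le> x a0" if "a \<in> A" for a using A that by simp
  have "(\<Sum>a\<in>A. x a) ^ p \<le> (real (card A) * x a0) ^ p"
    by (intro power_mono order_trans[OF sum_bounded_above[OF max]] sum_nonneg x) simp_all
  also have "\<dots> \<le> real (card A) ^ p * (\<Sum>a\<in>A. x a ^ p)"
    unfolding power_mult_distrib using a0 A x by (intro mult_left_mono member_le_sum) auto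
  finally show ?thesis .
qed

lemma add_power_le:
  fixes a b :: real
  assumes "0 \<le> a" "0 \<le> b"
  shows "(a + b) ^ p \<le> 2 ^ p * (a ^ p + b ^ p)"
  using sum_power_le_card_power[of "{True, False}" "\<lambda>t. if t then a else b" p] assms by simp

lemma floor_mult_divide_tendsto: "(\<lambda>n. real_of_int \<lfloor>real (Suc n) * u\<rfloor> / real (Suc n)) \<longlonglongrightarrow> u"
proof (rule tendsto_sandwich[of "\<lambda>n. u - inverse (real (Suc n))" _ _ "\<lambda>n. u"])
  show "\<forall>\<^sub>F n in sequentially. u - inverse (real (Suc n)) \<le> \<lfloor>real (Suc n) * u\<rfloor> / real (Suc n)"
  proof (intro always_eventually allI)
    fix n
    have "u - inverse (real (Suc n)) = (real (Suc n) * u - 1) / real (Suc n)"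
      by (simp add: field_simps)
    also have "\<dots> \<le> \<lfloor>real (Suc n) * u\<rfloor> / real (Suc n)"
      by (rule divide_right_mono) (linarith, simp)
    finally show "u - inverse (real (Suc n)) \<le> \<lfloor>real (Suc n) * u\<rfloor> / real (Suc n)" .
  qed
  show "\<forall>\<^sub>F n in sequentially. \<lfloor>real (Suc n) * u\<rfloor> / real (Suc n) \<le> u"
  proof (intro always_eventually allI)
    fix n
    have "\<lfloor>real (Suc n) * u\<rfloor> / real (Suc n) \<le> real (Suc n) * u / real (Suc n)"
      by (rule divide_right_mono) (linarith, simp)
    then show "\<lfloor>real (Suc n) * u\<rfloor> / real (Suc n) \<le> u" by simp
  qed
  show "(\<lambda>n. u - inverse (real (Suc n))) \<longlonglongrightarrow> u"
    using tendsto_diff[OF tendsto_const LIMSEQ_inverse_real_of_nat, of u] by simp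
qed simp

lemma bigo_power_at_right_0:
  assumes "k \<le> n"
  shows "(\<lambda>h::real. h ^ n) \<in> O[at_right 0](\<lambda>h. h ^ k)"
proof -
  have "\<forall>\<^sub>F h in at_right 0. norm (h ^ n) \<le> 1 * norm ((h::real) ^ k)"
    by (rule eventually_at_rightI[of 0 1]) (use assms in \<open>auto simp: power_abs intro: power_decreasing\<close>)
  then show ?thesis by (rule bigoI)
qed

lemma bigo_of_nonneg_le:
  fixes f g :: "'a \<Rightarrow> real"
  assumes "\<forall>\<^sub>F x in F. 0 \<le> f x \<and> f x \<le> g x" and "g \<in> O[F](h)"
  shows "f \<in> O[F](h)"
proof (rule landau_o.big_trans[OF landau_o.big_mono assms(2)])
  show "\<forall>\<^sub>F x in F. norm (f x) \<le> norm (g x)"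
    using assms(1) by eventually_elim auto
qed

lemma bigo_young_bound:
  fixes T E Z :: "real \<Rightarrow> real" and A K :: real
  assumes T: "T \<in> O[at_right 0](\<lambda>h. h)" and E: "E \<in> O[at_right 0](\<lambda>_. 1)"
    and Z: "Z \<in> O[at_right 0](\<lambda>h. h ^ (4 * b))"
  shows "(\<lambda>h. K * T h ^ (2 * n) * (h ^ b / 2 * A + h ^ b / 4 * E h + Z h / (4 * (h ^ b) ^ 3)))
      \<in> O[at_right 0](\<lambda>h. h ^ (2 * n + b))"
proof -
  have pos: "\<forall>\<^sub>F h in at_right 0. 0 < (h::real)" by (simp add: eventually_at_right_less)
  have "(\<lambda>h. h ^ b / 2 * A + h ^ b / 4 * E h + Z h / (4 * (h ^ b) ^ 3)) \<in> O[at_right 0](\<lambda>h. h ^ b)"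
  proof (intro sum_in_bigo)
    show "(\<lambda>h. h ^ b / 2 * A) \<in> O[at_right 0](\<lambda>h. h ^ b)"
      by (intro bigoI[where c = "\<bar>A\<bar>"] always_eventually) (simp add: abs_mult)
    show "(\<lambda>h. h ^ b / 4 * E h) \<in> O[at_right 0](\<lambda>h. h ^ b)"
      using landau_o.big.mult[OF _ E, of "\<lambda>h. h ^ b / 4" "\<lambda>h. h ^ b"] by simp
    obtain c where "\<forall>\<^sub>F h in at_right 0. norm (Z h) \<le> c * norm (h ^ (4 * b))"
      using landau_o.bigE[OF Z] by blast
    with pos have "\<forall>\<^sub>F h in at_right 0. norm (Z h / (4 * (h ^ b) ^ 3)) \<le> c / 4 * norm (h ^ b)"
    proof eventually_elim
      case (elim h)
      have h3: "0 < (h ^ b) ^ 3" using elim(1) by simp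
      have "h ^ (4 * b) = h ^ b * (h ^ b) ^ 3"
        unfolding power_mult[symmetric] power_add[symmetric] by (rule arg_cong[where f = "power h"]) simp
      then have "norm (Z h) \<le> c / 4 * h ^ b * (4 * (h ^ b) ^ 3)"
        using elim by simp
      then show ?case using h3 elim(1) by (simp add: divide_le_eq abs_mult)
    qed
    then show "(\<lambda>h. Z h / (4 * (h ^ b) ^ 3)) \<in> O[at_right 0](\<lambda>h. h ^ b)" by (rule bigoI)
  qed
  moreover have "(\<lambda>h. K * T h ^ (2 * n)) \<in> O[at_right 0](\<lambda>h. 1 * h ^ (2 * n))"
    by (rule landau_o.big.mult[OF _ landau_o.big_power[OF T]])
       (intro bigoI[where c = "\<bar>K\<bar>"] always_eventually, simp)
  ultimately have "(\<lambda>h. K * T h ^ (2 * n) * (h ^ b / 2 * A + h ^ b / 4 * E h + Z h / (4 * (h ^ b) ^ 3)))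
      \<in> O[at_right 0](\<lambda>h. 1 * h ^ (2 * n) * h ^ b)"
    by (rule landau_o.big.mult[rotated])
  then show ?thesis by (simp add: power_add)
qed

section \<open>Partitions of the unit interval\<close>

locale unit_partition =
  fixes r :: "nat \<Rightarrow> real" and m :: nat
  assumes r_0: "r 0 = 0" and r_m: "r m = 1" and strict_mono_r: "strict_mono_on {..m} r"
begin

lemma r_less_Suc: "i < m \<Longrightarrow> r i < r (Suc i)"
  using strict_mono_r by (auto simp: strict_mono_on_def)

lemma r_mono: "i \<le> j \<Longrightarrow> j \<le> m \<Longrightarrow> r i \<le> r j"
  using strict_mono_r by (metis atMost_iff le_less order.trans strict_mono_on_def)

lemma r_in_unit: "i \<le> m \<Longrightarrow> r i \<in> {0..1}"
  using r_mono[of 0 i] r_mono[of i m] r_0 r_m by auto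

lemma m_pos: "0 < m"
  using r_0 r_m by (metis gr0I zero_neq_one)

lemma piece_bounds: "i < m \<Longrightarrow> 0 \<le> r i \<and> r i < r (Suc i) \<and> r (Suc i) \<le> 1"
  using r_in_unit[of i] r_in_unit[of "Suc i"] r_less_Suc[of i] by auto

lemma piece_subset_unit: "i < m \<Longrightarrow> {r i..r (Suc i)} \<subseteq> {0..1}"
  using r_in_unit[of i] r_in_unit[of "Suc i"] by auto

lemma ex_piece:
  assumes u: "u \<in> {0..1}"
  shows "\<exists>i<m. u \<in> {r i..r (Suc i)}"
proof -
  define I where "I = {i. i < m \<and> r i \<le> u}"
  define i where "i = Max I"
  have fin: "finite I" unfolding I_def by simp
  have "0 \<in> I" using m_pos r_0 u by (simp add: I_def)
  then have "i \<in> I" unfolding i_def using Max_in[OF fin] by blast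
  then have i: "i < m" "r i \<le> u" by (simp_all add: I_def)
  have "u \<le> r (Suc i)"
  proof (cases "Suc i = m")
    case True
    then show ?thesis using r_m u by simp
  next
    case False
    then have "Suc i \<notin> I" using Max_ge[OF fin] by (fastforce simp: i_def)
    then show ?thesis using i False by (auto simp: I_def)
  qed
  with i show ?thesis by auto
qed

lemma Union_pieces: "(\<Union>i<m. {r i..r (Suc i)}) = {0..1}"
  using piece_subset_unit ex_piece by blast

lemma le_add_sum_piece_increments:
  fixes Z :: "real \<Rightarrow> real"
  assumes step: "\<And>i v. i < m \<Longrightarrow> v \<in> {r i..r (Suc i)} \<Longrightarrow> Z v \<le> Z (r i) + a i"
    and a_nonneg: "\<And>i. 0 \<le> a i" and u: "u \<in> {0..1}"
  shows "Z u \<le> Z 0 + (\<Sum>i<m. a i)"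
proof -
  have nodes: "Z (r j) \<le> Z 0 + (\<Sum>i<j. a i)" if "j \<le> m" for j
    using that
  proof (induction j)
    case 0
    show ?case by (simp add: r_0)
  next
    case (Suc j)
    then have "Z (r (Suc j)) \<le> Z (r j) + a j"
      using step[of j "r (Suc j)"] r_less_Suc[of j] by auto
    with Suc show ?case by simp
  qed
  obtain i where i: "i < m" "u \<in> {r i..r (Suc i)}" using ex_piece[OF u] by blast
  have "Z u \<le> Z 0 + (\<Sum>i<Suc i. a i)" using step[OF i] nodes[of i] i(1) by simp
  also have "\<dots> \<le> Z 0 + (\<Sum>i<m. a i)"
    by (intro add_left_mono sum_mono2) (use i a_nonneg in auto)
  finally show ?thesis .
qed

end

section \<open>Iterated integrals along a piecewise linear path\<close>

fun letter_coord :: "letter \<Rightarrow> 'd list \<Rightarrow> real \<times> (real^'d) \<Rightarrow> real" where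
  "letter_coord Tau ks z = fst z"
| "letter_coord Omega ks z = snd z $ last ks"

fun letter_indices :: "letter \<Rightarrow> 'd list \<Rightarrow> 'd list" where
  "letter_indices Tau ks = ks"
| "letter_indices Omega ks = butlast ks"

fun letter_size :: "letter \<Rightarrow> real \<times> (real^'d::finite) \<Rightarrow> real" where
  "letter_size Tau z = \<bar>fst z\<bar>"
| "letter_size Omega z = (\<Sum>j\<in>UNIV. \<bar>snd z $ j\<bar>)"

definition variation :: "(nat \<Rightarrow> real) \<Rightarrow> nat \<Rightarrow> (real \<Rightarrow> real \<times> (real^'d::finite)) \<Rightarrow> letter \<Rightarrow> real"
  where "variation r m p a = (\<Sum>i<m. letter_size a (p (r (Suc i)) - p (r i)))"

lemma iint_Cons:
  "iint phi dg (a # be) ks s =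
     integral {0..s} (\<lambda>u. letter_coord a ks (dg u) *\<^sub>R iint phi dg be (letter_indices a ks) u)"
  by (cases a) simp_all

lemma bounded_linear_letter_coord: "bounded_linear (letter_coord a ks)"
proof (cases a)
  case Tau
  then have "letter_coord a ks = fst" by (simp add: fun_eq_iff)
  then show ?thesis by (simp add: bounded_linear_fst)
next
  case Omega
  then have "letter_coord a ks = (\<lambda>z. snd z $ last ks)" by (simp add: fun_eq_iff)
  then show ?thesis by (simp add: bounded_linear_compose[OF bounded_linear_vec_nth bounded_linear_snd])
qed

lemma letter_coord_pl_deriv:
  "letter_coord a ks (pl_deriv r m p u) = (\<Sum>i<m. indicator {r i..<r (Suc i)} u *
       (letter_coord a ks (p (r (Suc i)) - p (r i)) / (r (Suc i) - r i)))"
  by (cases a) (simp_all add: pl_deriv_def fst_sum snd_sum sum_component)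

lemma abs_letter_coord_le: "\<bar>letter_coord a ks z\<bar> \<le> letter_size a z"
  by (cases a) (auto intro: member_le_sum)

lemma continuous_on_letter_size: "continuous_on UNIV (letter_size a)"
  by (cases a) (auto intro!: continuous_intros)

lemma variation_nonneg: "0 \<le> variation r m p a"
  unfolding variation_def by (cases a) (auto intro!: sum_nonneg)

lemma pl_length_le_variation: "pl_length r m p \<le> variation r m p Tau + variation r m p Omega"
  unfolding pl_length_def variation_def sum.distrib[symmetric]
proof (rule sum_mono)
  fix i
  obtain t x where z: "p (r (Suc i)) - p (r i) = (t, x)" by fastforce
  have "norm (t, x) \<le> \<bar>t\<bar> + norm x" using norm_Pair_le[of t x] by simp
  also have "norm x \<le> (\<Sum>j\<in>UNIV. \<bar>x $ j\<bar>)" by (rule norm_le_l1_cart)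
  finally show "norm (p (r (Suc i)) - p (r i)) \<le> letter_size Tau (p (r (Suc i)) - p (r i))
      + letter_size Omega (p (r (Suc i)) - p (r i))" by (simp add: z)
qed

lemma prod_list_map_letters:
  fixes v :: "letter \<Rightarrow> 'a::comm_monoid_mult"
  shows "prod_list (map v al) = v Tau ^ cnt Tau al * v Omega ^ cnt Omega al"
proof (induction al)
  case (Cons a al)
  then show ?case by (cases a) (simp_all add: cnt_def mult_ac)
qed (simp add: cnt_def)

context unit_partition
begin

lemma has_integral_pl_step:
  fixes \<Phi> :: "real \<Rightarrow> 'v::banach"
  assumes cont: "continuous_on {0..1} \<Phi>" and s: "s \<in> {0..1}"
  shows "((\<lambda>u. (\<Sum>i<m. indicator {r i..<r (Suc i)} u * c i) *\<^sub>R \<Phi> u) has_integral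
           (\<Sum>i<m. c i *\<^sub>R integral {r i..min (r (Suc i)) s} \<Phi>)) {0..s}"
proof -
  have piece: "((\<lambda>u. (indicator {r i..<r (Suc i)} u * c i) *\<^sub>R \<Phi> u) has_integral
           (c i *\<^sub>R integral {r i..min (r (Suc i)) s} \<Phi>)) {0..s}" if i: "i < m" for i
  proof -
    have "{r i..min (r (Suc i)) s} \<subseteq> {0..1}" using piece_subset_unit[OF i] by auto
    then have "\<Phi> integrable_on {r i..min (r (Suc i)) s}"
      by (intro integrable_continuous_real continuous_on_subset[OF cont])
    then have "((\<lambda>u. c i *\<^sub>R \<Phi> u) has_integral c i *\<^sub>R integral {r i..min (r (Suc i)) s} \<Phi>)
        {r i..min (r (Suc i)) s}"
      by (intro has_integral_cmul integrable_integral)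
    moreover have "max (r i) 0 = r i" using piece_bounds[OF i] by simp
    ultimately have "((\<lambda>u. if u \<in> {r i..r (Suc i)} then c i *\<^sub>R \<Phi> u else 0) has_integral
           c i *\<^sub>R integral {r i..min (r (Suc i)) s} \<Phi>) {0..s}"
      by (subst has_integral_restrict_Int) simp
    then show ?thesis
      by (rule has_integral_spike[OF negligible_sing[of "r (Suc i)"], rotated])
         (auto simp: indicator_def)
  qed
  have "((\<lambda>u. \<Sum>i<m. (indicator {r i..<r (Suc i)} u * c i) *\<^sub>R \<Phi> u) has_integral
           (\<Sum>i<m. c i *\<^sub>R integral {r i..min (r (Suc i)) s} \<Phi>)) {0..s}"
    by (rule has_integral_sum) (auto intro: piece)
  then show ?thesis by (simp only: scaleR_sum_left)
qed

lemma iint_Cons_pieces: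
  fixes phi :: "real \<Rightarrow> 'v::banach"
  assumes "continuous_on {0..1} (iint phi (pl_deriv r m p) be (letter_indices a ks))"
    and "s \<in> {0..1}"
  shows "iint phi (pl_deriv r m p) (a # be) ks s =
    (\<Sum>i<m. (letter_coord a ks (p (r (Suc i)) - p (r i)) / (r (Suc i) - r i)) *\<^sub>R
        integral {r i..min (r (Suc i)) s} (iint phi (pl_deriv r m p) be (letter_indices a ks)))"
  using integral_unique[OF has_integral_pl_step[OF assms,
        of "\<lambda>i. letter_coord a ks (p (r (Suc i)) - p (r i)) / (r (Suc i) - r i)"]]
  by (simp only: iint_Cons letter_coord_pl_deriv)

lemma continuous_on_integral_upto:
  fixes \<Phi> :: "real \<Rightarrow> 'v::banach"
  assumes cont: "continuous_on {0..1} \<Phi>" and ab: "0 \<le> a" "a \<le> b" "b \<le> 1"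
  shows "continuous_on {0..1} (\<lambda>s. integral {a..min b s} \<Phi>)"
proof -
  define clamp where "clamp s = max a (min b s)" for s
  have "\<Phi> integrable_on {a..b}"
    using ab by (intro integrable_continuous_real continuous_on_subset[OF cont]) auto
  then have "continuous_on {a..b} (\<lambda>x. integral {a..x} \<Phi>)"
    by (rule indefinite_integral_continuous_1)
  moreover have "continuous_on {0..1} clamp" unfolding clamp_def by (intro continuous_intros)
  ultimately have "continuous_on {0..1} (\<lambda>s. integral {a..clamp s} \<Phi>)"
    by (rule continuous_on_compose2) (use ab in \<open>auto simp: clamp_def\<close>)
  moreover have "integral {a..clamp s} \<Phi> = integral {a..min b s} \<Phi>" for s
    by (cases "a \<le> min b s") (auto simp: clamp_def)
  ultimately show ?thesis by simp
qed

lemma continuous_on_iint: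
  fixes phi :: "real \<Rightarrow> 'v::banach"
  assumes "continuous_on {0..1} phi"
  shows "continuous_on {0..1} (iint phi (pl_deriv r m p) be ks)"
proof (induction be arbitrary: ks)
  case Nil
  then show ?case using assms by simp
next
  case (Cons a be)
  have "continuous_on {0..1} (\<lambda>s. \<Sum>i<m. (letter_coord a ks (p (r (Suc i)) - p (r i)) / (r (Suc i) - r i)) *\<^sub>R
        integral {r i..min (r (Suc i)) s} (iint phi (pl_deriv r m p) be (letter_indices a ks)))"
    by (intro continuous_on_sum continuous_on_scaleR continuous_on_const
        continuous_on_integral_upto[OF Cons.IH])
       (use piece_bounds in \<open>auto simp: less_imp_le\<close>)
  then show ?case
    by (rule continuous_on_eq) (simp add: iint_Cons_pieces[OF Cons.IH])
qed

lemma norm_sum_pieces_le: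
  fixes \<Phi> :: "real \<Rightarrow> 'v::banach"
  assumes cont: "continuous_on {0..1} \<Phi>" and bound: "\<And>u. u \<in> {0..1} \<Longrightarrow> norm (\<Phi> u) \<le> P"
    and s: "s \<in> {0..1}"
  shows "norm (\<Sum>i<m. (d i / (r (Suc i) - r i)) *\<^sub>R integral {r i..min (r (Suc i)) s} \<Phi>)
          \<le> (\<Sum>i<m. \<bar>d i\<bar>) * P"
proof -
  have P: "0 \<le> P" using order_trans[OF norm_ge_zero bound[of 0]] by simp
  have piece: "norm ((d i / (r (Suc i) - r i)) *\<^sub>R integral {r i..min (r (Suc i)) s} \<Phi>) \<le> \<bar>d i\<bar> * P"
    if i: "i < m" for i
  proof -
    have len: "0 < r (Suc i) - r i" using piece_bounds[OF i] by simp
    have "norm (integral {r i..min (r (Suc i)) s} \<Phi>) \<le> P * (r (Suc i) - r i)"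
    proof (cases "r i \<le> min (r (Suc i)) s")
      case True
      have "norm (integral {r i..min (r (Suc i)) s} \<Phi>) \<le> P * (min (r (Suc i)) s - r i)"
        using piece_bounds[OF i] s
        by (intro integral_bound[OF True continuous_on_subset[OF cont]] bound) auto
      also have "\<dots> \<le> P * (r (Suc i) - r i)" using P by (intro mult_left_mono) auto
      finally show ?thesis .
    qed (use P len in simp)
    then have "\<bar>d i\<bar> / (r (Suc i) - r i) * norm (integral {r i..min (r (Suc i)) s} \<Phi>)
        \<le> \<bar>d i\<bar> / (r (Suc i) - r i) * (P * (r (Suc i) - r i))"
      using len by (intro mult_left_mono) auto
    then show ?thesis using len by (simp add: abs_div)
  qed
  have "norm (\<Sum>i<m. (d i / (r (Suc i) - r i)) *\<^sub>R integral {r i..min (r (Suc i)) s} \<Phi>)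
     \<le> (\<Sum>i<m. \<bar>d i\<bar> * P)"
    by (rule order_trans[OF norm_sum sum_mono]) (metis lessThan_iff piece)
  then show ?thesis by (simp add: sum_distrib_right)
qed

lemma norm_iint_le:
  fixes phi :: "real \<Rightarrow> 'v::banach"
  assumes cont: "continuous_on {0..1} phi" and bound: "\<And>u. u \<in> {0..1} \<Longrightarrow> norm (phi u) \<le> B"
  shows "s \<in> {0..1} \<Longrightarrow>
    norm (iint phi (pl_deriv r m p) be ks s) \<le> B * prod_list (map (variation r m p) be)"
proof (induction be arbitrary: ks s)
  case Nil
  then show ?case using bound by simp
next
  case (Cons a be)
  define P where "P = B * prod_list (map (variation r m p) be)"
  have "0 \<le> B" using order_trans[OF norm_ge_zero bound[of 0]] by simp
  then have P: "0 \<le> P" by (simp add: P_def prod_list_map_letters variation_nonneg)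
  have "norm (iint phi (pl_deriv r m p) (a # be) ks s)
      \<le> (\<Sum>i<m. \<bar>letter_coord a ks (p (r (Suc i)) - p (r i))\<bar>) * P"
    unfolding iint_Cons_pieces[OF continuous_on_iint[OF cont] Cons.prems] P_def
    by (rule norm_sum_pieces_le[OF continuous_on_iint[OF cont] Cons.IH Cons.prems])
  also have "\<dots> \<le> variation r m p a * P"
    unfolding variation_def by (intro mult_right_mono sum_mono abs_letter_coord_le P)
  finally show ?case by (simp add: P_def mult_ac)
qed

lemma iint_diff_scaleR:
  fixes phi :: "real \<Rightarrow> 'v::banach" and psi :: "real \<Rightarrow> real"
  assumes cont: "continuous_on {0..1} phi" and contp: "continuous_on {0..1} psi"
  shows "s \<in> {0..1} \<Longrightarrow> iint (\<lambda>u. phi u - psi u *\<^sub>R v) (pl_deriv r m p) be ks s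
      = iint phi (pl_deriv r m p) be ks s - iint psi (pl_deriv r m p) be ks s *\<^sub>R v"
proof (induction be arbitrary: ks s)
  case Nil
  then show ?case by simp
next
  case (Cons a be)
  have contd: "continuous_on {0..1} (\<lambda>u. phi u - psi u *\<^sub>R v)"
    by (intro continuous_intros cont contp)
  have piece: "integral {x..y} (iint (\<lambda>u. phi u - psi u *\<^sub>R v) (pl_deriv r m p) be ks')
     = integral {x..y} (iint phi (pl_deriv r m p) be ks')
       - integral {x..y} (iint psi (pl_deriv r m p) be ks') *\<^sub>R v"
    if xy: "{x..y} \<subseteq> {0..1}" for x y ks'
  proof -
    have int_phi: "iint phi (pl_deriv r m p) be ks' integrable_on {x..y}"
      and int_psi: "iint psi (pl_deriv r m p) be ks' integrable_on {x..y}"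
      by (intro integrable_continuous_real continuous_on_subset[OF continuous_on_iint xy] cont contp)+
    have "integral {x..y} (iint (\<lambda>u. phi u - psi u *\<^sub>R v) (pl_deriv r m p) be ks')
      = integral {x..y} (\<lambda>u. iint phi (pl_deriv r m p) be ks' u - iint psi (pl_deriv r m p) be ks' u *\<^sub>R v)"
      by (rule integral_cong) (use xy in \<open>auto intro: Cons.IH\<close>)
    also have "\<dots> = integral {x..y} (iint phi (pl_deriv r m p) be ks')
       - integral {x..y} (\<lambda>u. iint psi (pl_deriv r m p) be ks' u *\<^sub>R v)"
      by (rule integral_diff[OF int_phi integrable_on_scaleR_left[OF int_psi]])
    also have "integral {x..y} (\<lambda>u. iint psi (pl_deriv r m p) be ks' u *\<^sub>R v)
       = integral {x..y} (iint psi (pl_deriv r m p) be ks') *\<^sub>R v"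
      by (rule integral_unique[OF has_integral_scaleR_left[OF integrable_integral[OF int_psi]]])
    finally show ?thesis .
  qed
  have "{r i..min (r (Suc i)) s} \<subseteq> {0..1}" if "i < m" for i
    using piece_bounds[OF that] Cons.prems by auto
  then show ?case
    unfolding iint_Cons_pieces[OF continuous_on_iint[OF contd] Cons.prems]
      iint_Cons_pieces[OF continuous_on_iint[OF cont] Cons.prems]
      iint_Cons_pieces[OF continuous_on_iint[OF contp] Cons.prems]
    by (simp add: piece scaleR_diff_right sum_subtractf scaleR_sum_left)
qed

end

section \<open>Measurability\<close>

text \<open>Continuity in the real parameter makes \<open>\<Phi>\<close> jointly measurable: it is the pointwise limit
  of its evaluations along the grids \<open>\<int> / (n + 1)\<close>.\<close>

lemma measurable_pair_continuous_param:
  fixes \<Phi> :: "'w \<Rightarrow> real \<Rightarrow> 'v::euclidean_space"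
  assumes cont: "\<And>w. w \<in> space M \<Longrightarrow> continuous_on {0..1} (\<Phi> w)"
    and meas: "\<And>u. u \<in> {0..1} \<Longrightarrow> (\<lambda>w. \<Phi> w u) \<in> borel_measurable M"
  shows "(\<lambda>x. \<Phi> (fst x) (max 0 (min 1 (snd x)))) \<in> borel_measurable (M \<Otimes>\<^sub>M lborel)"
proof (rule borel_measurable_LIMSEQ_metric)
  define clamp :: "real \<Rightarrow> real" where "clamp u = max 0 (min 1 u)" for u
  have clamp: "clamp u \<in> {0..1}" for u by (simp add: clamp_def)
  fix n
  have "(\<lambda>x::'w \<times> real. \<lfloor>real (Suc n) * snd x\<rfloor>) \<in> measurable (M \<Otimes>\<^sub>M lborel) (count_space UNIV)"
    by (rule measurable_compose[OF _ measurable_real_floor]) measurable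
  then show "(\<lambda>x. \<Phi> (fst x) (clamp (\<lfloor>real (Suc n) * snd x\<rfloor> / real (Suc n))))
      \<in> borel_measurable (M \<Otimes>\<^sub>M lborel)"
    by (rule measurable_compose_countable[where f = "\<lambda>i x. \<Phi> (fst x) (clamp (i / real (Suc n)))", rotated])
       (rule measurable_compose[OF measurable_fst meas[OF clamp]])
next
  fix x :: "'w \<times> real"
  assume "x \<in> space (M \<Otimes>\<^sub>M lborel)"
  then have w: "fst x \<in> space M" by (auto simp: space_pair_measure)
  have "continuous_on UNIV (\<lambda>u::real. max 0 (min 1 u))" by (intro continuous_intros)
  then have "(\<lambda>n. max 0 (min 1 (\<lfloor>real (Suc n) * snd x\<rfloor> / real (Suc n)))) \<longlonglongrightarrow> max 0 (min 1 (snd x))"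
    by (rule continuous_on_tendsto_compose[OF _ floor_mult_divide_tendsto]) auto
  then show "(\<lambda>n. \<Phi> (fst x) (max 0 (min 1 (\<lfloor>real (Suc n) * snd x\<rfloor> / real (Suc n)))))
      \<longlonglongrightarrow> \<Phi> (fst x) (max 0 (min 1 (snd x)))"
    by (rule continuous_on_tendsto_compose[OF cont[OF w]]) auto
qed

lemma measurable_integral_continuous_param:
  fixes \<Phi> :: "'w \<Rightarrow> real \<Rightarrow> 'v::euclidean_space"
  assumes cont: "\<And>w. w \<in> space M \<Longrightarrow> continuous_on {0..1} (\<Phi> w)"
    and meas: "\<And>u. u \<in> {0..1} \<Longrightarrow> (\<lambda>w. \<Phi> w u) \<in> borel_measurable M"
    and ab: "0 \<le> a" "b \<le> 1"
  shows "(\<lambda>w. integral {a..b} (\<Phi> w)) \<in> borel_measurable M"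
proof -
  have joint: "(\<lambda>x. \<Phi> (fst x) (max 0 (min 1 (snd x)))) \<in> borel_measurable (M \<Otimes>\<^sub>M lborel)"
    by (rule measurable_pair_continuous_param[OF cont meas])
  have lint: "(\<lambda>w. \<integral>u. indicator {a..b} u *\<^sub>R \<Phi> w (max 0 (min 1 u)) \<partial>lborel) \<in> borel_measurable M"
    by (rule lborel.borel_measurable_lebesgue_integral) (use joint in measurable)
  have eq: "integral {a..b} (\<Phi> w) = (\<integral>u. indicator {a..b} u *\<^sub>R \<Phi> w (max 0 (min 1 u)) \<partial>lborel)"
    if w: "w \<in> space M" for w
  proof -
    have "continuous_on UNIV (\<lambda>u::real. max 0 (min 1 u))" by (intro continuous_intros)
    then have "continuous_on UNIV (\<lambda>u. \<Phi> w (max 0 (min 1 u)))"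
      by (rule continuous_on_compose2[OF cont[OF w]]) auto
    then have int: "set_integrable lborel {a..b} (\<lambda>u. \<Phi> w (max 0 (min 1 u)))"
      unfolding set_integrable_def
      by (rule borel_integrable_compact[OF compact_Icc continuous_on_subset]) simp
    have "integral {a..b} (\<Phi> w) = integral {a..b} (\<lambda>u. \<Phi> w (max 0 (min 1 u)))"
      by (rule integral_cong) (use ab in auto)
    also have "\<dots> = (LINT u:{a..b}|lborel. \<Phi> w (max 0 (min 1 u)))"
      by (rule set_borel_integral_eq_integral(2)[OF int, symmetric])
    finally show ?thesis by (simp add: set_lebesgue_integral_def)
  qed
  show ?thesis
    using lint by (rule measurable_cong[THEN iffD1, rotated]) (simp add: eq)
qed

context unit_partition
begin

lemma measurable_iint:
  fixes phi :: "'w \<Rightarrow> real \<Rightarrow> 'v::euclidean_space" and p :: "'w \<Rightarrow> real \<Rightarrow> real \<times> (real^'d)"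
  assumes cont: "\<And>w. w \<in> space M \<Longrightarrow> continuous_on {0..1} (phi w)"
    and meas: "\<And>u. u \<in> {0..1} \<Longrightarrow> (\<lambda>w. phi w u) \<in> borel_measurable M"
    and nodes: "\<And>i. i \<le> m \<Longrightarrow> (\<lambda>w. p w (r i)) \<in> borel_measurable M"
  shows "s \<in> {0..1} \<Longrightarrow> (\<lambda>w. iint (phi w) (pl_deriv r m (p w)) be ks s) \<in> borel_measurable M"
proof (induction be arbitrary: ks s)
  case Nil
  then show ?case using meas by simp
next
  case (Cons a be)
  have coord: "letter_coord a ks \<in> borel_measurable borel"
    by (intro borel_measurable_continuous_onI linear_continuous_on bounded_linear_letter_coord)
  have "(\<lambda>w. \<Sum>i<m. (letter_coord a ks (p w (r (Suc i)) - p w (r i)) / (r (Suc i) - r i)) *\<^sub>R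
      integral {r i..min (r (Suc i)) s} (iint (phi w) (pl_deriv r m (p w)) be (letter_indices a ks)))
      \<in> borel_measurable M"
  proof (intro borel_measurable_sum borel_measurable_scaleR borel_measurable_divide borel_measurable_const)
    fix i
    assume "i \<in> {..<m}"
    then have i: "i < m" by simp
    show "(\<lambda>w. letter_coord a ks (p w (r (Suc i)) - p w (r i))) \<in> borel_measurable M"
      using i by (intro measurable_compose[OF borel_measurable_diff coord] nodes) auto
    show "(\<lambda>w. integral {r i..min (r (Suc i)) s} (iint (phi w) (pl_deriv r m (p w)) be (letter_indices a ks)))
        \<in> borel_measurable M"
      by (rule measurable_integral_continuous_param[OF continuous_on_iint[OF cont] Cons.IH])
         (use piece_bounds[OF i] Cons.prems in auto)
  qed
  then show ?case
    by (rule measurable_cong[THEN iffD1, rotated])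
       (rule iint_Cons_pieces[OF continuous_on_iint[OF cont] Cons.prems, symmetric]; assumption)
qed

lemma measurable_variation:
  assumes "\<And>i. i \<le> m \<Longrightarrow> (\<lambda>w. p w (r i)) \<in> borel_measurable M"
  shows "(\<lambda>w. variation r m (p w) a) \<in> borel_measurable M"
  unfolding variation_def using assms
  by (intro borel_measurable_sum measurable_compose[OF borel_measurable_diff
        borel_measurable_continuous_onI[OF continuous_on_letter_size]]) auto

lemma measurable_J_norm2:
  fixes p :: "'w \<Rightarrow> real \<Rightarrow> real \<times> (real^'d)" and Y :: "'w \<Rightarrow> real \<Rightarrow> 'y::metric_space"
    and F :: "'y \<Rightarrow> 'v::euclidean_space"
  assumes nodes: "\<And>i. i \<le> m \<Longrightarrow> (\<lambda>w. p w (r i)) \<in> borel_measurable M"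
    and Y_cont: "\<And>w. w \<in> space M \<Longrightarrow> continuous_on {0..1} (Y w)"
    and Y_meas: "\<And>u. u \<in> {0..1} \<Longrightarrow> (\<lambda>w. Y w u) \<in> borel_measurable M"
    and F_cont: "continuous_on UNIV F"
  shows "(\<lambda>w. J_norm2 r m (p w) (Y w) F al) \<in> borel_measurable M"
proof -
  have F: "F \<in> borel_measurable borel" by (rule borel_measurable_continuous_onI[OF F_cont])
  have [measurable]: "(\<lambda>w. iint (\<lambda>u. F (Y w u)) (pl_deriv r m (p w)) (rev al) ks 1) \<in> borel_measurable M" for ks
    by (rule measurable_iint[where phi = "\<lambda>w u. F (Y w u)" and p = p, OF _ _ nodes])
       (auto intro: continuous_on_compose2[OF F_cont Y_cont] measurable_compose[OF Y_meas F])
  have [measurable]: "(\<lambda>w. iint (\<lambda>u. 1::real) (pl_deriv r m (p w)) (rev al) ks 1) \<in> borel_measurable M" for ks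
    by (rule measurable_iint[where phi = "\<lambda>w u. 1" and p = p, OF _ _ nodes]) auto
  have [measurable]: "(\<lambda>w. F (Y w 0)) \<in> borel_measurable M"
    by (rule measurable_compose[OF Y_meas F]) simp
  show ?thesis unfolding J_norm2_def J_F_def I_F_def I_one_def by measurable
qed

end

section \<open>Growth of the solution\<close>

text \<open>Gronwall's argument for linear growth, applied to \<open>ln (1 + \<bar>Y\<bar>\<^sup>2)\<close>, which, unlike
  \<open>\<bar>Y\<bar>\<close>, is differentiable everywhere.\<close>

lemma ln_one_plus_norm_sq_le:
  fixes Y :: "real \<Rightarrow> 'a::real_inner"
  assumes der: "\<And>u. u \<in> {a..b} \<Longrightarrow> (Y has_vector_derivative Yd u) (at u within {a..b})"
    and growth: "\<And>u. u \<in> {a..b} \<Longrightarrow> norm (Yd u) \<le> \<kappa> * (1 + norm (Y u))"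
    and \<kappa>: "0 \<le> \<kappa>" and u: "u \<in> {a..b}"
  shows "ln (1 + (norm (Y u))\<^sup>2) \<le> ln (1 + (norm (Y a))\<^sup>2) + 2 * sqrt 2 * \<kappa> * (u - a)"
proof -
  define c where "c = 2 * sqrt 2 * \<kappa>"
  define \<phi> where "\<phi> t = ln (1 + Y t \<bullet> Y t) - c * (t - a)" for t
  have contY: "continuous_on {a..b} Y"
    using der by (auto simp: continuous_on_eq_continuous_within intro!: has_vector_derivative_continuous der)
  have nonzero: "1 + Y t \<bullet> Y t \<noteq> 0" for t
    using inner_ge_zero[of "Y t"] by linarith
  have "\<phi> u \<le> \<phi> a"
  proof (rule DERIV_nonpos_imp_decreasing_open[of a u \<phi>])
    show "a \<le> u" using u by simp
    show "continuous_on {a..u} \<phi>"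
      unfolding \<phi>_def using u nonzero
      by (intro continuous_intros continuous_on_subset[OF contY]) auto
    fix x
    assume x: "a < x" "x < u"
    then have xab: "x \<in> {a..b}" using u by auto
    have dY: "(Y has_derivative (\<lambda>h. h *\<^sub>R Yd x)) (at x)"
      using der[OF xab] at_within_Icc_at[of a x b] x u by (simp add: has_vector_derivative_def)
    have "((\<lambda>t. Y t \<bullet> Y t) has_real_derivative 2 * (Y x \<bullet> Yd x)) (at x)"
      unfolding has_field_derivative_def
      by (rule has_derivative_eq_rhs[OF has_derivative_inner[OF dY dY]])
         (auto simp: fun_eq_iff inner_commute algebra_simps)
    then have "(\<phi> has_real_derivative 2 * (Y x \<bullet> Yd x) / (1 + Y x \<bullet> Y x) - c) (at x)"
      unfolding \<phi>_def by (auto intro!: derivative_eq_intros simp: add_pos_nonneg)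
    moreover have "2 * (Y x \<bullet> Yd x) \<le> c * (1 + Y x \<bullet> Y x)"
    proof -
      have "Y x \<bullet> Yd x \<le> norm (Y x) * (\<kappa> * (1 + norm (Y x)))"
        by (rule order_trans[OF norm_cauchy_schwarz mult_left_mono[OF growth[OF xab]]]) simp
      also have "\<dots> \<le> \<kappa> * (sqrt 2 * (1 + (norm (Y x))\<^sup>2))"
        using mult_left_mono[OF mult_one_plus_le_sqrt2[OF norm_ge_zero] \<kappa>] by (simp add: mult_ac)
      finally show ?thesis by (simp add: c_def dot_square_norm algebra_simps)
    qed
    then have "2 * (Y x \<bullet> Yd x) / (1 + Y x \<bullet> Y x) - c \<le> 0"
      by (simp add: add_pos_nonneg divide_le_eq)
    ultimately show "\<exists>y. (\<phi> has_real_derivative y) (at x) \<and> y \<le> 0" by blast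
  qed
  then show ?thesis by (simp add: \<phi>_def c_def dot_square_norm)
qed

context unit_partition
begin

lemma one_plus_norm_le_of_piecewise_growth:
  fixes Y :: "real \<Rightarrow> 'a::real_inner"
  assumes der: "\<And>i u. i < m \<Longrightarrow> u \<in> {r i..r (Suc i)} \<Longrightarrow>
      (Y has_vector_derivative Yd i u) (at u within {r i..r (Suc i)})"
    and growth: "\<And>i u. i < m \<Longrightarrow> u \<in> {r i..r (Suc i)} \<Longrightarrow>
      norm (Yd i u) \<le> k i / (r (Suc i) - r i) * (1 + norm (Y u))"
    and k: "\<And>i. 0 \<le> k i" and u: "u \<in> {0..1}"
  shows "1 + norm (Y u) \<le> sqrt 2 * (1 + norm (Y 0)) * exp (sqrt 2 * (\<Sum>i<m. k i))"
proof -
  define K where "K = (\<Sum>i<m. k i)"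
  have "ln (1 + (norm (Y u))\<^sup>2) \<le> ln (1 + (norm (Y 0))\<^sup>2) + (\<Sum>i<m. 2 * sqrt 2 * k i)"
  proof (rule le_add_sum_piece_increments[OF _ _ u])
    fix i v
    assume i: "i < m" and v: "v \<in> {r i..r (Suc i)}"
    have len: "0 < r (Suc i) - r i" using piece_bounds[OF i] by simp
    have "k i / (r (Suc i) - r i) * (v - r i) \<le> k i"
      using v len k[of i] by (simp add: divide_le_eq mult_left_mono)
    then have "2 * sqrt 2 * (k i / (r (Suc i) - r i) * (v - r i)) \<le> 2 * sqrt 2 * k i"
      by (rule mult_left_mono) simp
    then have "2 * sqrt 2 * (k i / (r (Suc i) - r i)) * (v - r i) \<le> 2 * sqrt 2 * k i"
      by (simp only: mult.assoc)
    moreover have "ln (1 + (norm (Y v))\<^sup>2)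
        \<le> ln (1 + (norm (Y (r i)))\<^sup>2) + 2 * sqrt 2 * (k i / (r (Suc i) - r i)) * (v - r i)"
      by (rule ln_one_plus_norm_sq_le[OF der[OF i] growth[OF i] divide_nonneg_pos[OF k len] v])
    ultimately show "ln (1 + (norm (Y v))\<^sup>2) \<le> ln (1 + (norm (Y (r i)))\<^sup>2) + 2 * sqrt 2 * k i"
      by linarith
  qed (use k in simp)
  then have "exp (ln (1 + (norm (Y u))\<^sup>2)) \<le> exp (ln (1 + (norm (Y 0))\<^sup>2) + 2 * sqrt 2 * K)"
    by (simp add: K_def sum_distrib_left)
  then have sq: "1 + (norm (Y u))\<^sup>2 \<le> (1 + (norm (Y 0))\<^sup>2) * exp (2 * sqrt 2 * K)"
    by (simp add: exp_add add_pos_nonneg)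
  have "(1 + norm (Y u))\<^sup>2 \<le> 2 * (1 + (norm (Y u))\<^sup>2)"
    using sum_squares_bound[of 1 "norm (Y u)"] by (simp add: power2_eq_square algebra_simps)
  also have "\<dots> \<le> 2 * ((1 + norm (Y 0))\<^sup>2 * exp (2 * sqrt 2 * K))"
  proof -
    have "1 + (norm (Y 0))\<^sup>2 \<le> (1 + norm (Y 0))\<^sup>2" by (simp add: power2_eq_square algebra_simps)
    then have "(1 + (norm (Y 0))\<^sup>2) * exp (2 * sqrt 2 * K) \<le> (1 + norm (Y 0))\<^sup>2 * exp (2 * sqrt 2 * K)"
      by (rule mult_right_mono) simp
    from order_trans[OF sq this] show ?thesis by simp
  qed
  also have "\<dots> = (sqrt 2 * (1 + norm (Y 0)) * exp (sqrt 2 * K))\<^sup>2"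
    by (simp add: power_mult_distrib power2_eq_square mult_ac flip: exp_add)
  finally show ?thesis unfolding K_def by (rule power2_le_imp_le) simp
qed

lemma norm_diff_le_of_piecewise_growth:
  fixes Y :: "real \<Rightarrow> 'a::real_inner"
  assumes der: "\<And>i u. i < m \<Longrightarrow> u \<in> {r i..r (Suc i)} \<Longrightarrow>
      (Y has_vector_derivative Yd i u) (at u within {r i..r (Suc i)})"
    and growth: "\<And>i u. i < m \<Longrightarrow> u \<in> {r i..r (Suc i)} \<Longrightarrow>
      norm (Yd i u) \<le> k i / (r (Suc i) - r i) * (1 + norm (Y u))"
    and k: "\<And>i. 0 \<le> k i" and u: "u \<in> {0..1}"
  shows "norm (Y u - Y 0) \<le> sqrt 2 * (\<Sum>i<m. k i) * (1 + norm (Y 0)) * exp (sqrt 2 * (\<Sum>i<m. k i))"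
proof -
  define E where "E = sqrt 2 * (1 + norm (Y 0)) * exp (sqrt 2 * (\<Sum>i<m. k i))"
  have "norm (Y u - Y 0) \<le> norm (Y 0 - Y 0) + (\<Sum>i<m. k i * E)"
  proof (rule le_add_sum_piece_increments[where Z = "\<lambda>v. norm (Y v - Y 0)", OF _ _ u])
    fix i v
    assume i: "i < m" and v: "v \<in> {r i..r (Suc i)}"
    have len: "0 < r (Suc i) - r i" using piece_bounds[OF i] by simp
    have "norm (Y v - Y (r i)) \<le> k i / (r (Suc i) - r i) * E * norm (v - r i)"
    proof (rule differentiable_bound[of "{r i..r (Suc i)}" Y "\<lambda>x h. h *\<^sub>R Yd i x"])
      fix x
      assume x: "x \<in> {r i..r (Suc i)}"
      show "(Y has_derivative (\<lambda>h. h *\<^sub>R Yd i x)) (at x within {r i..r (Suc i)})"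
        using der[OF i x] by (simp add: has_vector_derivative_def)
      have "onorm (\<lambda>h. h *\<^sub>R Yd i x) = norm (Yd i x)"
        using onorm_scaleR_left[OF bounded_linear_ident] by (simp add: onorm_id)
      also have "\<dots> \<le> k i / (r (Suc i) - r i) * (1 + norm (Y x))" by (rule growth[OF i x])
      also have "\<dots> \<le> k i / (r (Suc i) - r i) * E"
        using one_plus_norm_le_of_piecewise_growth[OF der growth k, of x] piece_subset_unit[OF i] x
        by (intro mult_left_mono divide_nonneg_pos[OF k len]) (auto simp: E_def)
      finally show "onorm (\<lambda>h. h *\<^sub>R Yd i x) \<le> k i / (r (Suc i) - r i) * E" .
    qed (use v in auto)
    also have "\<dots> \<le> k i / (r (Suc i) - r i) * E * (r (Suc i) - r i)"
      using v len k[of i] by (intro mult_left_mono) (auto simp: E_def)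
    finally have "norm (Y v - Y (r i)) \<le> k i * E" using len by simp
    then show "norm (Y v - Y 0) \<le> norm (Y (r i) - Y 0) + k i * E"
      using norm_triangle_ineq[of "Y v - Y (r i)" "Y (r i) - Y 0"] by simp
  qed (use k in \<open>simp add: E_def\<close>)
  also have "\<dots> = (\<Sum>i<m. k i) * E" by (simp add: sum_distrib_right)
  finally show ?thesis by (simp add: E_def mult_ac)
qed

lemma continuous_on_of_piecewise_derivative:
  assumes "\<And>i u. i < m \<Longrightarrow> u \<in> {r i..r (Suc i)} \<Longrightarrow>
      (Y has_vector_derivative Yd i u) (at u within {r i..r (Suc i)})"
  shows "continuous_on {0..1} Y"
proof -
  have "continuous_on {r i..r (Suc i)} Y" if "i < m" for i
    unfolding continuous_on_eq_continuous_within
    using has_vector_derivative_continuous[OF assms[OF that]] by blast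
  then have "continuous_on (\<Union>i<m. {r i..r (Suc i)}) Y"
    by (intro continuous_on_closed_Union) auto
  then show ?thesis by (simp add: Union_pieces)
qed

lemma pl_ode_deviation_le:
  fixes Y :: "real \<Rightarrow> real^'e" and p :: "real \<Rightarrow> real \<times> (real^'d)"
    and f :: "real^'e \<Rightarrow> real^'e" and g :: "real^'e \<Rightarrow> real^'d^'e"
  assumes ode: "\<And>i u. i < m \<Longrightarrow> u \<in> {r i..r (Suc i)} \<Longrightarrow>
      (Y has_vector_derivative
         (let D = (1 / (r (Suc i) - r i)) *\<^sub>R (p (r (Suc i)) - p (r i))
          in fst D *\<^sub>R f (Y u) + g (Y u) *v snd D))
      (at u within {r i..r (Suc i)})"
    and f_growth: "\<And>z. norm (f z) \<le> C * (1 + norm z)"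
    and g_growth: "\<And>z. norm (g z) \<le> C * (1 + norm z)"
    and u: "u \<in> {0..1}"
  shows "norm (Y u - Y 0) \<le> 2 * C * pl_length r m p * (1 + norm (Y 0)) * exp (2 * C * pl_length r m p)"
proof -
  have C: "0 \<le> C" using order_trans[OF norm_ge_zero f_growth[of 0]] by simp
  define k where "k i = sqrt 2 * C * norm (p (r (Suc i)) - p (r i))" for i
  have growth: "norm (let D = (1 / (r (Suc i) - r i)) *\<^sub>R (p (r (Suc i)) - p (r i))
          in fst D *\<^sub>R f (Y v) + g (Y v) *v snd D) \<le> k i / (r (Suc i) - r i) * (1 + norm (Y v))"
    if i: "i < m" for i v
  proof -
    define D where "D = (1 / (r (Suc i) - r i)) *\<^sub>R (p (r (Suc i)) - p (r i))"
    have len: "0 < r (Suc i) - r i" using piece_bounds[OF i] by simp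
    have "norm (fst D *\<^sub>R f (Y v) + g (Y v) *v snd D)
        \<le> \<bar>fst D\<bar> * (C * (1 + norm (Y v))) + C * (1 + norm (Y v)) * norm (snd D)"
      by (intro order_trans[OF norm_triangle_ineq] add_mono
          order_trans[OF norm_matrix_vector_mult_le] mult_right_mono g_growth)
         (auto intro: mult_left_mono f_growth)
    also have "\<dots> = C * (1 + norm (Y v)) * (\<bar>fst D\<bar> + norm (snd D))" by (simp add: algebra_simps)
    also have "\<dots> \<le> C * (1 + norm (Y v)) * (sqrt 2 * norm D)"
      by (rule mult_left_mono[OF norm_Pair_le_sqrt2]) (use C in simp)
    also have "norm D = norm (p (r (Suc i)) - p (r i)) / (r (Suc i) - r i)"
      unfolding D_def using len by simp
    finally show ?thesis unfolding k_def D_def Let_def by (simp add: field_simps)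
  qed
  have k: "0 \<le> k i" for i
    unfolding k_def using C by (intro mult_nonneg_nonneg) simp_all
  have "norm (Y u - Y 0) \<le> sqrt 2 * (\<Sum>i<m. k i) * (1 + norm (Y 0)) * exp (sqrt 2 * (\<Sum>i<m. k i))"
    by (rule norm_diff_le_of_piecewise_growth[OF ode growth k u])
  also have "sqrt 2 * (\<Sum>i<m. k i) = 2 * C * pl_length r m p"
    by (simp add: k_def pl_length_def sum_distrib_left mult.assoc[symmetric])
  finally show ?thesis .
qed

end

section \<open>Pathwise bounds\<close>

context unit_partition
begin

lemma norm_J_F_le:
  fixes Y :: "real \<Rightarrow> 'y::metric_space" and F :: "'y \<Rightarrow> 'v::banach"
  assumes contY: "continuous_on {0..1} Y" and Lip: "L-lipschitz_on UNIV F"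
    and dev: "\<And>u. u \<in> {0..1} \<Longrightarrow> dist (Y u) (Y 0) \<le> D"
  shows "norm (J_F r m p Y F al ks) \<le> L * D * prod_list (map (variation r m p) al)"
proof -
  have contFY: "continuous_on {0..1} (\<lambda>u. F (Y u))"
    by (rule continuous_on_compose2[OF lipschitz_on_continuous_on[OF Lip] contY]) auto
  have L: "0 \<le> L" using Lip by (simp add: lipschitz_on_def)
  have "J_F r m p Y F al ks = iint (\<lambda>u. F (Y u) - 1 *\<^sub>R F (Y 0)) (pl_deriv r m p) (rev al) ks 1"
    unfolding J_F_def I_F_def I_one_def
    by (rule iint_diff_scaleR[OF contFY continuous_on_const, symmetric]) simp
  also have "norm \<dots> \<le> L * D * prod_list (map (variation r m p) (rev al))"
  proof (rule norm_iint_le)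
    show "continuous_on {0..1} (\<lambda>u. F (Y u) - 1 *\<^sub>R F (Y 0))"
      using contFY by (intro continuous_intros) auto
    fix u :: real
    assume u: "u \<in> {0..1}"
    have "norm (F (Y u) - 1 *\<^sub>R F (Y 0)) \<le> L * dist (Y u) (Y 0)"
      using Lip by (simp add: lipschitz_on_def dist_norm)
    also have "\<dots> \<le> L * D" by (rule mult_left_mono[OF dev[OF u] L])
    finally show "norm (F (Y u) - 1 *\<^sub>R F (Y 0)) \<le> L * D" .
  qed simp
  finally show ?thesis by (simp add: rev_map[symmetric])
qed

lemma J_norm2_nonneg: "0 \<le> J_norm2 r m p Y F al"
  unfolding J_norm2_def by (simp add: sum_nonneg)

lemma J_norm2_le:
  fixes Y :: "real \<Rightarrow> 'y::metric_space" and F :: "'y \<Rightarrow> 'v::banach"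
    and p :: "real \<Rightarrow> real \<times> (real^'d)"
  assumes "continuous_on {0..1} Y" and "L-lipschitz_on UNIV F"
    and "\<And>u. u \<in> {0..1} \<Longrightarrow> dist (Y u) (Y 0) \<le> D"
  shows "J_norm2 r m p Y F al
    \<le> real CARD('d) ^ cnt Omega al * (L * D * prod_list (map (variation r m p) al))\<^sup>2"
proof -
  have "J_norm2 r m p Y F al
      \<le> real (card {ks::'d list. length ks = cnt Omega al}) * (L * D * prod_list (map (variation r m p) al))\<^sup>2"
    unfolding J_norm2_def
    by (rule sum_bounded_above, rule power_mono[OF norm_J_F_le[OF assms] norm_ge_zero])
  then show ?thesis using card_lists_length_eq[of "UNIV :: 'd set" "cnt Omega al"] by simp
qed

lemma J_norm2_le_pl_ode:
  fixes Y :: "real \<Rightarrow> real^'e" and p :: "real \<Rightarrow> real \<times> (real^'d)"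
    and f :: "real^'e \<Rightarrow> real^'e" and g :: "real^'e \<Rightarrow> real^'d^'e"
    and F :: "real^'e \<Rightarrow> 'v::banach"
  assumes ode: "\<And>i u. i < m \<Longrightarrow> u \<in> {r i..r (Suc i)} \<Longrightarrow>
      (Y has_vector_derivative
         (let D = (1 / (r (Suc i) - r i)) *\<^sub>R (p (r (Suc i)) - p (r i))
          in fst D *\<^sub>R f (Y u) + g (Y u) *v snd D))
      (at u within {r i..r (Suc i)})"
    and f_growth: "\<And>z. norm (f z) \<le> C * (1 + norm z)"
    and g_growth: "\<And>z. norm (g z) \<le> C * (1 + norm z)"
    and Lip: "L-lipschitz_on UNIV F"
  shows "J_norm2 r m p Y F al \<le> real CARD('d) ^ cnt Omega al * (2 * C * L)\<^sup>2
      * variation r m p Tau ^ (2 * cnt Tau al) * ((1 + norm (Y 0))\<^sup>2 * exp (4 * C * pl_length r m p)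
         * (variation r m p Tau + variation r m p Omega) ^ (2 * Suc (cnt Omega al)))"
proof -
  define T W V len where "T = variation r m p Tau" and "W = variation r m p Omega"
    and "V = variation r m p Tau + variation r m p Omega" and "len = pl_length r m p"
  define K where "K = real CARD('d) ^ cnt Omega al * (2 * C * L)\<^sup>2 * T ^ (2 * cnt Tau al)"
  have K: "0 \<le> K" unfolding K_def T_def by (simp add: variation_nonneg)
  have len: "0 \<le> len" unfolding len_def pl_length_def by (simp add: sum_nonneg)
  have W: "0 \<le> W" unfolding W_def by (rule variation_nonneg)
  have lenV: "len \<le> V" and WV: "W \<le> V"
    using pl_length_le_variation[of r m p] variation_nonneg[of r m p Tau]
    by (simp_all add: len_def V_def W_def)
  have "J_norm2 r m p Y F al \<le> real CARD('d) ^ cnt Omega al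
      * (L * (2 * C * len * (1 + norm (Y 0)) * exp (2 * C * len)) * (T ^ cnt Tau al * W ^ cnt Omega al))\<^sup>2"
  proof -
    have "dist (Y u) (Y 0) \<le> 2 * C * len * (1 + norm (Y 0)) * exp (2 * C * len)" if "u \<in> {0..1}" for u
      using pl_ode_deviation_le[OF ode f_growth g_growth that] by (simp add: dist_norm len_def)
    from J_norm2_le[OF continuous_on_of_piecewise_derivative[OF ode] Lip this, where p = p and al = al]
    show ?thesis by (simp add: prod_list_map_letters T_def W_def)
  qed
  also have "\<dots> = K * ((1 + norm (Y 0))\<^sup>2 * exp (4 * C * len) * (len\<^sup>2 * W ^ (2 * cnt Omega al)))"
  proof -
    define a E where "a = 1 + norm (Y 0)" and "E = exp (2 * C * len)"
    have E2: "exp (4 * C * len) = E\<^sup>2" by (simp add: E_def power2_eq_square flip: exp_add)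
    show ?thesis unfolding K_def a_def[symmetric] E_def[symmetric] E2
      by (simp add: power_mult_distrib power_mult[symmetric] mult_ac)
  qed
  also have "\<dots> \<le> K * ((1 + norm (Y 0))\<^sup>2 * exp (4 * C * len) * V ^ (2 * Suc (cnt Omega al)))"
  proof -
    have "len\<^sup>2 * W ^ (2 * cnt Omega al) \<le> V\<^sup>2 * V ^ (2 * cnt Omega al)"
      using len W lenV WV by (intro mult_mono power_mono) auto
    then show ?thesis by (intro mult_left_mono K) (simp_all flip: power_add)
  qed
  finally show ?thesis by (simp add: K_def T_def V_def len_def)
qed

lemma J_norm2_le_young:
  fixes Y :: "real \<Rightarrow> real^'e" and p :: "real \<Rightarrow> real \<times> (real^'d)"
    and f :: "real^'e \<Rightarrow> real^'e" and g :: "real^'e \<Rightarrow> real^'d^'e"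
    and F :: "real^'e \<Rightarrow> 'v::banach"
  assumes ode: "\<And>i u. i < m \<Longrightarrow> u \<in> {r i..r (Suc i)} \<Longrightarrow>
      (Y has_vector_derivative
         (let D = (1 / (r (Suc i) - r i)) *\<^sub>R (p (r (Suc i)) - p (r i))
          in fst D *\<^sub>R f (Y u) + g (Y u) *v snd D))
      (at u within {r i..r (Suc i)})"
    and f_growth: "\<And>z. norm (f z) \<le> C * (1 + norm z)"
    and g_growth: "\<And>z. norm (g z) \<le> C * (1 + norm z)"
    and Lip: "L-lipschitz_on UNIV F" and \<epsilon>: "0 < \<epsilon>"
  shows "J_norm2 r m p Y F al \<le> real CARD('d) ^ cnt Omega al * (2 * C * L)\<^sup>2
      * variation r m p Tau ^ (2 * cnt Tau al)
      * (\<epsilon> / 2 * (1 + norm (Y 0)) ^ 4 + \<epsilon> / 4 * exp (16 * C * pl_length r m p)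
         + (variation r m p Tau + variation r m p Omega) ^ (8 * Suc (cnt Omega al)) / (4 * \<epsilon> ^ 3))"
proof -
  define V len where "V = variation r m p Tau + variation r m p Omega" and "len = pl_length r m p"
  define K where "K = real CARD('d) ^ cnt Omega al * (2 * C * L)\<^sup>2 * variation r m p Tau ^ (2 * cnt Tau al)"
  have K: "0 \<le> K" unfolding K_def by (simp add: variation_nonneg)
  have V: "0 \<le> V" unfolding V_def by (simp add: variation_nonneg)
  have "J_norm2 r m p Y F al \<le> K * ((1 + norm (Y 0))\<^sup>2 * exp (4 * C * len) * V ^ (2 * Suc (cnt Omega al)))"
    using J_norm2_le_pl_ode[OF ode f_growth g_growth Lip] by (simp add: K_def V_def len_def)
  also have "\<dots> \<le> K * (\<epsilon> / 2 * ((1 + norm (Y 0))\<^sup>2)\<^sup>2 + \<epsilon> / 4 * exp (4 * C * len) ^ 4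
      + (V ^ (2 * Suc (cnt Omega al))) ^ 4 / (4 * \<epsilon> ^ 3))"
    using V by (intro mult_left_mono young_three K \<epsilon>) auto
  also have "\<dots> = K * (\<epsilon> / 2 * (1 + norm (Y 0)) ^ 4 + \<epsilon> / 4 * exp (16 * C * len)
      + V ^ (8 * Suc (cnt Omega al)) / (4 * \<epsilon> ^ 3))"
  proof -
    have "((1 + norm (Y 0))\<^sup>2)\<^sup>2 = (1 + norm (Y 0)) ^ 4" by simp
    moreover have "exp (4 * C * len) ^ 4 = exp (16 * C * len)"
      by (simp add: mult.assoc flip: exp_of_nat_mult)
    moreover have "(V ^ (2 * Suc (cnt Omega al))) ^ 4 = V ^ (8 * Suc (cnt Omega al))"
      unfolding power_mult[symmetric] by (simp add: mult.commute)
    ultimately show ?thesis by (simp only:)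
  qed
  finally show ?thesis by (simp add: K_def V_def len_def mult.assoc)
qed

lemma variation_Omega_power_le:
  fixes p :: "real \<Rightarrow> real \<times> (real^'d)"
  shows "variation r m p Omega ^ q \<le> (real m * real CARD('d)) ^ q
     * (\<Sum>i<m. \<Sum>j\<in>UNIV. \<bar>(snd (p (r (Suc i))) - snd (p (r i))) $ j\<bar> ^ q)"
proof -
  have "variation r m p Omega ^ q
      \<le> real m ^ q * (\<Sum>i<m. (\<Sum>j\<in>UNIV. \<bar>(snd (p (r (Suc i))) - snd (p (r i))) $ j\<bar>) ^ q)"
    using sum_power_le_card_power[OF finite_lessThan, of m
        "\<lambda>i. \<Sum>j\<in>UNIV. \<bar>(snd (p (r (Suc i))) - snd (p (r i))) $ j\<bar>" q] m_pos
    by (simp add: variation_def lessThan_empty_iff)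
  also have "\<dots> \<le> real m ^ q * (\<Sum>i<m. real CARD('d) ^ q
      * (\<Sum>j\<in>UNIV. \<bar>(snd (p (r (Suc i))) - snd (p (r i))) $ j\<bar> ^ q))"
    by (intro mult_left_mono sum_mono sum_power_le_card_power) auto
  finally show ?thesis by (simp add: sum_distrib_left power_mult_distrib mult_ac)
qed

end

section \<open>Moments\<close>

lemma (in prob_space) integrable_one_plus_norm_power:
  fixes X :: "'a \<Rightarrow> 'b::real_normed_vector"
  assumes X: "X \<in> borel_measurable M" and int: "integrable M (\<lambda>w. norm (X w) ^ p)"
  shows "integrable M (\<lambda>w. (1 + norm (X w)) ^ p)"
proof (rule Bochner_Integration.integrable_bound)
  show "integrable M (\<lambda>w. 2 ^ p * (1 + norm (X w) ^ p))"
    by (intro integrable_mult_right Bochner_Integration.integrable_add integrable_const int)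
  show "(\<lambda>w. (1 + norm (X w)) ^ p) \<in> borel_measurable M" using X by measurable
  show "AE w in M. norm ((1 + norm (X w)) ^ p) \<le> norm (2 ^ p * (1 + norm (X w) ^ p))"
    using add_power_le[of 1 "norm (X _)" p] by (intro AE_I2) simp
qed

context unit_partition
begin

lemma integral_J_norm2_le_young:
  fixes p :: "'w \<Rightarrow> real \<Rightarrow> real \<times> (real^'d)" and Y :: "'w \<Rightarrow> real \<Rightarrow> real^'e"
    and f :: "real^'e \<Rightarrow> real^'e" and g :: "real^'e \<Rightarrow> real^'d^'e"
    and F :: "real^'e \<Rightarrow> 'v::euclidean_space"
  assumes P: "prob_space M"
    and ode: "\<And>w i u. w \<in> space M \<Longrightarrow> i < m \<Longrightarrow> u \<in> {r i..r (Suc i)} \<Longrightarrow>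
      (Y w has_vector_derivative
         (let D = (1 / (r (Suc i) - r i)) *\<^sub>R (p w (r (Suc i)) - p w (r i))
          in fst D *\<^sub>R f (Y w u) + g (Y w u) *v snd D))
      (at u within {r i..r (Suc i)})"
    and f_growth: "\<And>z. norm (f z) \<le> C * (1 + norm z)"
    and g_growth: "\<And>z. norm (g z) \<le> C * (1 + norm z)"
    and Lip: "L-lipschitz_on UNIV F" and \<epsilon>: "0 < \<epsilon>"
    and nodes: "\<And>i. i \<le> m \<Longrightarrow> (\<lambda>w. p w (r i)) \<in> borel_measurable M"
    and Y_meas: "\<And>u. u \<in> {0..1} \<Longrightarrow> (\<lambda>w. Y w u) \<in> borel_measurable M"
    and init: "\<And>w. w \<in> space M \<Longrightarrow> Y w 0 = Y0 w"
    and time: "\<And>w. w \<in> space M \<Longrightarrow> variation r m (p w) Tau = T"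
    and int_init: "integrable M (\<lambda>w. (1 + norm (Y0 w)) ^ 4)"
    and int_exp: "integrable M (\<lambda>w. exp (16 * C * pl_length r m (p w)))"
    and int_var: "integrable M
      (\<lambda>w. (variation r m (p w) Tau + variation r m (p w) Omega) ^ (8 * Suc (cnt Omega al)))"
  shows "integrable M (\<lambda>w. J_norm2 r m (p w) (Y w) F al)
    \<and> (\<integral>w. J_norm2 r m (p w) (Y w) F al \<partial>M)
      \<le> real CARD('d) ^ cnt Omega al * (2 * C * L)\<^sup>2 * T ^ (2 * cnt Tau al)
        * (\<epsilon> / 2 * (\<integral>w. (1 + norm (Y0 w)) ^ 4 \<partial>M)
           + \<epsilon> / 4 * (\<integral>w. exp (16 * C * pl_length r m (p w)) \<partial>M)
           + (\<integral>w. (variation r m (p w) Tau + variation r m (p w) Omega) ^ (8 * Suc (cnt Omega al)) \<partial>M)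
             / (4 * \<epsilon> ^ 3))"
proof -
  interpret prob_space M by (rule P)
  define G where "G w = real CARD('d) ^ cnt Omega al * (2 * C * L)\<^sup>2 * T ^ (2 * cnt Tau al)
    * (\<epsilon> / 2 * (1 + norm (Y0 w)) ^ 4 + \<epsilon> / 4 * exp (16 * C * pl_length r m (p w))
       + (variation r m (p w) Tau + variation r m (p w) Omega) ^ (8 * Suc (cnt Omega al)) / (4 * \<epsilon> ^ 3))"
    for w
  have G: "integrable M G"
    unfolding G_def using int_init int_exp int_var by simp
  have J_le_G: "J_norm2 r m (p w) (Y w) F al \<le> G w" if w: "w \<in> space M" for w
    using J_norm2_le_young[OF ode[OF w] f_growth g_growth Lip \<epsilon>] by (simp add: G_def init time w)
  have Y_cont: "continuous_on {0..1} (Y w)" if "w \<in> space M" for w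
    by (rule continuous_on_of_piecewise_derivative[OF ode[OF that]])
  have J_meas: "(\<lambda>w. J_norm2 r m (p w) (Y w) F al) \<in> borel_measurable M"
    by (rule measurable_J_norm2[where p = p and Y = Y, OF nodes Y_cont Y_meas
          lipschitz_on_continuous_on[OF Lip]])
  have J: "integrable M (\<lambda>w. J_norm2 r m (p w) (Y w) F al)"
    by (rule Bochner_Integration.integrable_bound[OF G J_meas])
       (auto intro!: AE_I2 order_trans[OF J_le_G abs_ge_self] simp: J_norm2_nonneg)
  have "(\<integral>w. J_norm2 r m (p w) (Y w) F al \<partial>M) \<le> integral\<^sup>L M G"
    by (rule integral_mono[OF J G J_le_G])
  also have "integral\<^sup>L M G = real CARD('d) ^ cnt Omega al * (2 * C * L)\<^sup>2 * T ^ (2 * cnt Tau al)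
        * (\<epsilon> / 2 * (\<integral>w. (1 + norm (Y0 w)) ^ 4 \<partial>M)
           + \<epsilon> / 4 * (\<integral>w. exp (16 * C * pl_length r m (p w)) \<partial>M)
           + (\<integral>w. (variation r m (p w) Tau + variation r m (p w) Omega) ^ (8 * Suc (cnt Omega al)) \<partial>M)
             / (4 * \<epsilon> ^ 3))"
    unfolding G_def using int_init int_exp int_var by simp
  finally show ?thesis using J by simp
qed

lemma integral_variation_power_le:
  fixes p :: "'w \<Rightarrow> real \<Rightarrow> real \<times> (real^'d)"
  assumes P: "prob_space M"
    and nodes: "\<And>i. i \<le> m \<Longrightarrow> (\<lambda>w. p w (r i)) \<in> borel_measurable M"
    and time: "\<And>w. w \<in> space M \<Longrightarrow> variation r m (p w) Tau = T"
    and incr_int: "\<And>i j. i < m \<Longrightarrow>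
      integrable M (\<lambda>w. \<bar>(snd (p w (r (Suc i))) - snd (p w (r i))) $ j\<bar> ^ q)"
  shows "integrable M (\<lambda>w. (variation r m (p w) Tau + variation r m (p w) Omega) ^ q)
    \<and> (\<integral>w. (variation r m (p w) Tau + variation r m (p w) Omega) ^ q \<partial>M)
      \<le> 2 ^ q * (T ^ q + (real m * real CARD('d)) ^ q
         * (\<Sum>i<m. \<Sum>j\<in>UNIV. \<integral>w. \<bar>(snd (p w (r (Suc i))) - snd (p w (r i))) $ j\<bar> ^ q \<partial>M))"
proof -
  interpret prob_space M by (rule P)
  define Z where "Z i j w = \<bar>(snd (p w (r (Suc i))) - snd (p w (r i))) $ j\<bar> ^ q" for i j w
  define R where "R w = 2 ^ q * (T ^ q + (real m * real CARD('d)) ^ q * (\<Sum>i<m. \<Sum>j\<in>UNIV. Z i j w))" for w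
  have Z: "integrable M (Z i j)" if "i \<in> {..<m}" for i j
    unfolding Z_def using incr_int that by simp
  have R: "integrable M R"
    unfolding R_def by (intro integrable_mult_right Bochner_Integration.integrable_add integrable_const
        Bochner_Integration.integrable_sum Z)
  have le_R: "(variation r m (p w) Tau + variation r m (p w) Omega) ^ q \<le> R w" if w: "w \<in> space M" for w
  proof -
    have "(variation r m (p w) Tau + variation r m (p w) Omega) ^ q
        \<le> 2 ^ q * (T ^ q + variation r m (p w) Omega ^ q)"
      using add_power_le[OF variation_nonneg variation_nonneg] time[OF w] by metis
    then show ?thesis
      unfolding R_def Z_def
      by (rule order_trans) (intro mult_left_mono add_left_mono variation_Omega_power_le, simp)
  qed
  have V: "integrable M (\<lambda>w. (variation r m (p w) Tau + variation r m (p w) Omega) ^ q)"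
  proof (rule Bochner_Integration.integrable_bound[OF R])
    show "(\<lambda>w. (variation r m (p w) Tau + variation r m (p w) Omega) ^ q) \<in> borel_measurable M"
      by (intro borel_measurable_power borel_measurable_add measurable_variation nodes)
    show "AE w in M. norm ((variation r m (p w) Tau + variation r m (p w) Omega) ^ q) \<le> norm (R w)"
      using le_R by (intro AE_I2) (auto simp: variation_nonneg intro: order_trans[OF _ abs_ge_self])
  qed
  have "(\<integral>w. (variation r m (p w) Tau + variation r m (p w) Omega) ^ q \<partial>M) \<le> integral\<^sup>L M R"
    by (rule integral_mono[OF V R le_R])
  also have "integral\<^sup>L M R
      = 2 ^ q * (T ^ q + (real m * real CARD('d)) ^ q * (\<Sum>i<m. \<Sum>j\<in>UNIV. integral\<^sup>L M (Z i j)))"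
  proof -
    have S: "integrable M (\<lambda>w. \<Sum>i<m. \<Sum>j\<in>UNIV. Z i j w)"
      by (intro Bochner_Integration.integrable_sum Z)
    have "(\<integral>w. (\<Sum>i<m. \<Sum>j\<in>UNIV. Z i j w) \<partial>M) = (\<Sum>i<m. \<Sum>j\<in>UNIV. integral\<^sup>L M (Z i j))"
      by (simp add: Bochner_Integration.integral_sum Bochner_Integration.integrable_sum Z)
    with S show ?thesis unfolding R_def by (simp add: prob_space)
  qed
  finally show ?thesis using V by (simp add: Z_def[abs_def])
qed

lemma variation_moment_bigo:
  fixes p :: "real \<Rightarrow> 'w \<Rightarrow> real \<Rightarrow> real \<times> (real^'d)" and T :: "real \<Rightarrow> real"
  assumes P: "prob_space M"
    and nodes: "\<And>h i. 0 < h \<Longrightarrow> i \<le> m \<Longrightarrow> (\<lambda>w. p h w (r i)) \<in> borel_measurable M"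
    and time: "\<And>h w. 0 < h \<Longrightarrow> w \<in> space M \<Longrightarrow> variation r m (p h w) Tau = T h"
    and T: "T \<in> O[at_right 0](\<lambda>h. h)"
    and incr_int: "\<And>h i j. 0 < h \<Longrightarrow> i < m \<Longrightarrow>
      integrable M (\<lambda>w. \<bar>(snd (p h w (r (Suc i))) - snd (p h w (r i))) $ j\<bar> ^ (2 * k))"
    and incr_bigo: "\<And>i j. i < m \<Longrightarrow>
      (\<lambda>h. \<integral>w. \<bar>(snd (p h w (r (Suc i))) - snd (p h w (r i))) $ j\<bar> ^ (2 * k) \<partial>M)
        \<in> O[at_right 0](\<lambda>h. h ^ k)"
  shows "(\<lambda>h. \<integral>w. (variation r m (p h w) Tau + variation r m (p h w) Omega) ^ (2 * k) \<partial>M)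
      \<in> O[at_right 0](\<lambda>h. h ^ k)"
proof -
  interpret prob_space M by (rule P)
  define B where "B h = 2 ^ (2 * k) * (T h ^ (2 * k) + (real m * real CARD('d)) ^ (2 * k)
    * (\<Sum>i<m. \<Sum>j\<in>UNIV. \<integral>w. \<bar>(snd (p h w (r (Suc i))) - snd (p h w (r i))) $ j\<bar> ^ (2 * k) \<partial>M))" for h
  have "\<forall>\<^sub>F h in at_right 0. 0 < (h::real)" by (simp add: eventually_at_right_less)
  then have "\<forall>\<^sub>F h in at_right 0.
      norm (\<integral>w. (variation r m (p h w) Tau + variation r m (p h w) Omega) ^ (2 * k) \<partial>M) \<le> norm (B h)"
  proof eventually_elim
    case (elim h)
    have "0 \<le> (\<integral>w. (variation r m (p h w) Tau + variation r m (p h w) Omega) ^ (2 * k) \<partial>M)"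
      by (intro integral_nonneg_AE AE_I2) (simp add: variation_nonneg)
    moreover have "(\<integral>w. (variation r m (p h w) Tau + variation r m (p h w) Omega) ^ (2 * k) \<partial>M) \<le> B h"
      using integral_variation_power_le[OF P nodes[OF elim] time[OF elim] incr_int[OF elim]]
      unfolding B_def by simp
    ultimately show ?case by simp
  qed
  then have "(\<lambda>h. \<integral>w. (variation r m (p h w) Tau + variation r m (p h w) Omega) ^ (2 * k) \<partial>M)
      \<in> O[at_right 0](B)"
    by (rule landau_o.big_mono)
  also have "B \<in> O[at_right 0](\<lambda>h. h ^ k)"
  proof -
    have "(\<lambda>h. T h ^ (2 * k)) \<in> O[at_right 0](\<lambda>h. h ^ k)"
      by (rule landau_o.big_trans[OF landau_o.big_power[OF T] bigo_power_at_right_0]) simp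
    moreover have "(\<lambda>h. \<Sum>i<m. \<Sum>j\<in>UNIV.
        \<integral>w. \<bar>(snd (p h w (r (Suc i))) - snd (p h w (r i))) $ j\<bar> ^ (2 * k) \<partial>M) \<in> O[at_right 0](\<lambda>h. h ^ k)"
      using incr_bigo by (intro big_sum_in_bigo) auto
    ultimately have "(\<lambda>h. T h ^ (2 * k) + (real m * real CARD('d)) ^ (2 * k) * (\<Sum>i<m. \<Sum>j\<in>UNIV.
        \<integral>w. \<bar>(snd (p h w (r (Suc i))) - snd (p h w (r i))) $ j\<bar> ^ (2 * k) \<partial>M)) \<in> O[at_right 0](\<lambda>h. h ^ k)"
      using m_pos by (intro sum_in_bigo(1)) simp_all
    then show ?thesis unfolding B_def by simp
  qed
  finally show ?thesis .
qed

end

lemma powr_two_ord_plus_one: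
  fixes h :: real
  assumes "0 < h"
  shows "h powr (2 * ord al + 1) = h ^ (2 * cnt Tau al + Suc (cnt Omega al))"
proof -
  have "2 * ord al + 1 = real (2 * cnt Tau al + Suc (cnt Omega al))" by (simp add: ord_def)
  then show ?thesis using assms by (simp only: powr_realpow)
qed

theorem lemma3p5:
  fixes M :: "'w measure"
    and m :: nat and r :: "nat \<Rightarrow> real"
    and gam :: "real \<Rightarrow> 'w \<Rightarrow> real \<Rightarrow> real \<times> (real^'d)"
    and dt :: "real \<Rightarrow> nat \<Rightarrow> real"
    and y0 :: "'w \<Rightarrow> real^'e"
    and y :: "real \<Rightarrow> 'w \<Rightarrow> real \<Rightarrow> real^'e"
    and f :: "real^'e \<Rightarrow> real^'e"
    and g :: "real^'e \<Rightarrow> real^'d^'e"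
    and C :: real
    and F :: "real^'e \<Rightarrow> (real^'e)^('d^'b)"
    and al :: "letter list"
  assumes P: "prob_space M"
    and r0: "r 0 = 0" and rm: "r m = 1" and rmono: "strict_mono_on {..m} r"
    and pl: "\<And>h w i u. h > 0 \<Longrightarrow> w \<in> space M \<Longrightarrow> i < m \<Longrightarrow> u \<in> {r i..r (Suc i)} \<Longrightarrow>
          gam h w u = gam h w (r i) + ((u - r i) / (r (Suc i) - r i)) *\<^sub>R
                                        (gam h w (r (Suc i)) - gam h w (r i))"
    and tinc: "\<And>h w i. h > 0 \<Longrightarrow> w \<in> space M \<Longrightarrow> i < m \<Longrightarrow>
          fst (gam h w (r (Suc i))) - fst (gam h w (r i)) = dt h i"
    and tinc_O: "\<And>i. i < m \<Longrightarrow> (\<lambda>h. dt h i) \<in> O[at_right 0](\<lambda>h. h)"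
    and winc_int: "\<And>h i j k. h > 0 \<Longrightarrow> i < m \<Longrightarrow>
          integrable M (\<lambda>w. \<bar>(snd (gam h w (r (Suc i))) - snd (gam h w (r i))) $ j\<bar> ^ (2 * k))"
    and winc_O: "\<And>i j k. i < m \<Longrightarrow>
          (\<lambda>h. integral\<^sup>L M (\<lambda>w. \<bar>(snd (gam h w (r (Suc i))) - snd (gam h w (r i))) $ j\<bar> ^ (2 * k)))
            \<in> O[at_right 0](\<lambda>h. h ^ k)"
    and y0_meas: "y0 \<in> borel_measurable M"
    and y0_L4: "integrable M (\<lambda>w. norm (y0 w) ^ 4)"
    and indep: "\<And>h. h > 0 \<Longrightarrow>
          (\<lambda>w. restrict (gam h w) {0..1}) \<in> M \<rightarrow>\<^sub>M PiM {0..1} (\<lambda>_. borel) \<and>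
          (\<forall>A \<in> sets borel. \<forall>B \<in> sets (PiM {0..1} (\<lambda>_. borel)).
             measure M {w \<in> space M. y0 w \<in> A \<and> restrict (gam h w) {0..1} \<in> B}
             = measure M {w \<in> space M. y0 w \<in> A} * measure M {w \<in> space M. restrict (gam h w) {0..1} \<in> B})"
    and f_growth: "\<And>z. norm (f z) \<le> C * (1 + norm z)"
    and g_growth: "\<And>z. norm (g z) \<le> C * (1 + norm z)"
    and exp_int: "\<And>h. h > 0 \<Longrightarrow> integrable M (\<lambda>w. exp (16 * C * pl_length r m (gam h w)))"
    and exp_bdd: "\<exists>B. \<forall>\<^sub>F h in at_right 0. integral\<^sup>L M (\<lambda>w. exp (16 * C * pl_length r m (gam h w))) \<le> B"
    and y_init: "\<And>h w. h > 0 \<Longrightarrow> w \<in> space M \<Longrightarrow> y h w 0 = y0 w"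
    and y_ode: "\<And>h w i u. h > 0 \<Longrightarrow> w \<in> space M \<Longrightarrow> i < m \<Longrightarrow> u \<in> {r i..r (Suc i)} \<Longrightarrow>
          (y h w has_vector_derivative
             (let D = (1 / (r (Suc i) - r i)) *\<^sub>R (gam h w (r (Suc i)) - gam h w (r i))
              in fst D *\<^sub>R f (y h w u) + g (y h w u) *v snd D))
          (at u within {r i..r (Suc i)})"
    and y_meas: "\<And>h u. h > 0 \<Longrightarrow> u \<in> {0..1} \<Longrightarrow> (\<lambda>w. y h w u) \<in> borel_measurable M"
    and F_lip: "\<exists>L. L-lipschitz_on UNIV F"
  shows "(\<forall>\<^sub>F h in at_right 0. integrable M (\<lambda>w. J_norm2 r m (gam h w) (y h w) F al))
       \<and> (\<lambda>h. integral\<^sup>L M (\<lambda>w. J_norm2 r m (gam h w) (y h w) F al))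
            \<in> O[at_right 0](\<lambda>h. h powr (2 * ord al + 1))"
proof -
  interpret prob_space M by (rule P)
  interpret unit_partition r m by unfold_locales (fact r0 rm rmono)+
  obtain L where Lip: "L-lipschitz_on UNIV F" using F_lip by blast
  define n b where "n = cnt Tau al" and "b = Suc (cnt Omega al)"
  define J where "J h = (\<lambda>w. J_norm2 r m (gam h w) (y h w) F al)" for h
  define T where "T h = (\<Sum>i<m. \<bar>dt h i\<bar>)" for h
  define A where "A = (\<integral>w. (1 + norm (y0 w)) ^ 4 \<partial>M)"
  define E where "E h = (\<integral>w. exp (16 * C * pl_length r m (gam h w)) \<partial>M)" for h
  define Z where "Z h = (\<integral>w. (variation r m (gam h w) Tau + variation r m (gam h w) Omega) ^ (8 * b) \<partial>M)"
    for h
  define R where "R h = real CARD('d) ^ cnt Omega al * (2 * C * L)\<^sup>2 * T h ^ (2 * n)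
    * (h ^ b / 2 * A + h ^ b / 4 * E h + Z h / (4 * (h ^ b) ^ 3))" for h
  have nodes: "(\<lambda>w. gam h w (r i)) \<in> borel_measurable M" if "0 < h" "i \<le> m" for h i
    using measurable_compose[OF conjunct1[OF indep[OF that(1)]]
        measurable_component_singleton[OF r_in_unit[OF that(2)]]] r_in_unit[OF that(2)]
    by simp
  have time: "variation r m (gam h w) Tau = T h" if "0 < h" "w \<in> space M" for h w
    using tinc[OF that] by (simp add: variation_def T_def)
  have T_bigo: "T \<in> O[at_right 0](\<lambda>h. h)"
    unfolding T_def using tinc_O by (intro big_sum_in_bigo) simp
  have E_bigo: "E \<in> O[at_right 0](\<lambda>_. 1)"
  proof -
    obtain B where "\<forall>\<^sub>F h in at_right 0. E h \<le> B" using exp_bdd by (auto simp: E_def)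
    moreover have "0 \<le> E h" for h unfolding E_def by simp
    ultimately show ?thesis by (intro bigoI[where c = "\<bar>B\<bar>"]) (auto elim!: eventually_mono)
  qed
  have Z_bigo: "Z \<in> O[at_right 0](\<lambda>h. h ^ (4 * b))"
    using variation_moment_bigo[OF P nodes time T_bigo winc_int winc_O, of "4 * b"]
    by (simp add: Z_def[abs_def])
  have bound: "integrable M (J h) \<and> integral\<^sup>L M (J h) \<le> R h" if h: "0 < h" for h
    using integral_J_norm2_le_young[OF P y_ode[OF h] f_growth g_growth Lip _ nodes[OF h] y_meas[OF h]
        y_init[OF h] time[OF h] integrable_one_plus_norm_power[OF y0_meas y0_L4] exp_int[OF h]]
      conjunct1[OF integral_variation_power_le[OF P nodes[OF h] time[OF h] winc_int[OF h], of "4 * b"]] h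
    by (simp add: J_def R_def n_def b_def A_def E_def Z_def)
  have "\<forall>\<^sub>F h in at_right 0. 0 \<le> integral\<^sup>L M (J h) \<and> integral\<^sup>L M (J h) \<le> R h"
    using eventually_at_right_less[of 0]
    by eventually_elim (use bound in \<open>auto intro!: integral_nonneg_AE AE_I2 simp: J_def J_norm2_nonneg\<close>)
  then have "(\<lambda>h. integral\<^sup>L M (J h)) \<in> O[at_right 0](\<lambda>h. h ^ (2 * n + b))"
    by (rule bigo_of_nonneg_le) (unfold R_def, rule bigo_young_bound[OF T_bigo E_bigo Z_bigo])
  moreover have "\<forall>\<^sub>F h in at_right 0. h ^ (2 * n + b) = h powr (2 * ord al + 1)"
    using eventually_at_right_less[of 0]
    by eventually_elim (simp add: powr_two_ord_plus_one n_def b_def)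
  ultimately show ?thesis
    using eventually_at_right_less[of 0] bound unfolding J_def
    by (auto simp: landau_o.big.cong elim: eventually_mono)
qed

end
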